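(* Let $\mathbf{k}$ be a commutative ring, $\lambda\in\mathbf{k}$ and $X$ a set. Then $(\mathbf{k}\mathcal{F}_X^a,\diamond,u,\Delta_a,\epsilon_a)$ is a Hopf algebra, i.e. this bialgebra admits an antipode $S$.
   Context: Angularly decorated forests. The set $\mathcal{F}_X^a$ of angularly decorated (planar rooted) forests and its subset of angularly decorated trees are defined recursively: the one-vertex tree $\bullet$ is a tree; if $T_1,\dots,T_k$ ($k\ge1$) are trees and $x_1,\dots,x_{k-1}\in X$, then the word $T_1x_1T_2x_2\cdots x_{k-1}T_k$ is a forest (for $k=1$ it is the tree $T_1$); and if $F=T_1x_1\cdots x_{k-1}T_k$ is a forest, then $B^+(F)$ is a tree, namely the planar tree obtained by adding a new root joined by edges to the roots of $T_1,\dots,T_k$, the decoration $x_i$ sitting in the angle between the $i$-th and $(i+1)$-th children. The depth of a tree is the maximal length of a path from root to a leaf; the depth of a forest is the maximum depth of its trees. $\mathbf{k}\mathcal{F}_X^a$ is the free $\mathbf{k}$-module on $\mathcal{F}_X^a$; $B^+$ is extended linearly. Product. The bilinear product $\diamond$ is defined by recursion on the sum of depths: for trees, $\bullet\diamond\bullet=\bullet$, $T\diamond\bullet=T$, $\bullet\diamond T=T$, and $B^+(\overline{T})\diamond B^+(\overline{T'})=B^+\big(B^+(\overline{T})\diamond\overline{T'}\big)+B^+\big(\overline{T}\diamond B^+(\overline{T'})\big)+\lambda B^+\big(\overline{T}\diamond\overline{T'}\big)$; for forests $T=T_1x_1\cdots x_{m-1}T_m$ and $T'=T'_1y_1\cdots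 y_{n-1}T'_n$, $T\diamond T'=T_1x_1\cdots x_{m-1}(T_m\diamond T'_1)y_1T'_2\cdots y_{n-1}T'_n$, extended linearly in the middle factor. Unit $u:\mathbf{k}\to\mathbf{k}\mathcal{F}_X^a$, $1\mapsto\bullet$; counit $\epsilon_a(\bullet)=1$, $\epsilon_a(F)=0$ for $F\in\mathcal{F}_X^a\setminus\{\bullet\}$. Coproduct. Let $F\in\mathcal{F}_X^a$. A non-leaf vertex is a vertex with at least one child. For a non-leaf vertex $v$, the rooted subtree $F_v$ consists of $v$, its descendants, the edges between them and all decorations in angles between children of its vertices. A decoration occurrence is an occurrence of a letter of $X$ in $F$. An admissible subforest $H$ of $F$ is a finite (possibly empty) set of pieces, each a rooted subtree $F_v$ ($v$ non-leaf) or a single decoration occurrence, pairwise disjoint (no shared vertices among chosen rooted subtrees, no chosen decoration inside a chosen rooted subtree), listed left to right as $H_1,\dots,H_n$. Its closure is $\mathrm{cl}(H)=\widehat{H_1}\diamond\cdots\diamond\widehat{H_n}$ with $\widehat{H_i}=H_i$ for a rooted subtree and $\widehat{H_i}=\bullet x\bullet$ for an occurrence of $x$; $\mathrm{cl}(\emptyset)=\bullet$. The quotient $F/H$ is obtained by replacing each chosen rooted subtree by a leaf $\bullet$ and each chosen decoration occurrence by a symbol $\star$, then evaluating recursively: a word $T_1s_1\cdots s_{k-1}T_k$ ($s_i\in X\cup\{\star\}$) evaluates to $\overline{T_1}\diamond c(s_1)\diamond\cdots\diamond c(s_{k-1})\diamond\overline{T_k}$ with $c(x)=\bullet x\bullet$,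 $c(\star)=\bullet$, $\overline{\bullet}=\bullet$, $\overline{B^+(W)}=B^+(\text{value of }W)$. The angular coproduct is $\Delta_a(F)=\sum_H\mathrm{cl}(H)\otimes F/H$ over all admissible subforests $H$, extended linearly. *)

theory Defs
  imports Main "HOL-Library.Poly_Mapping"
begin

text \<open>The free k-module on a set B is modelled as the type of finitely supported
  functions; the basis element b is single b 1.  The tensor product of free modules on A and B
  is identified with the free module on A \<times> B.  k-linear maps are determined by their
  values on basis elements; lin f is the linear extension of f.\<close>

definition bas :: "'b \<Rightarrow> ('b \<Rightarrow>\<^sub>0 'k::comm_ring_1)" where
  "bas b = Poly_Mapping.single b 1"

definition smult :: "'k::comm_ring_1 \<Rightarrow> ('b \<Rightarrow>\<^sub>0 'k) \<Rightarrow> ('b \<Rightarrow>\<^sub>0 'k)" where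
  "smult c v = Poly_Mapping.map (\<lambda>x. c * x) v"

definition lin :: "('a \<Rightarrow> ('b \<Rightarrow>\<^sub>0 'k::comm_ring_1)) \<Rightarrow> ('a \<Rightarrow>\<^sub>0 'k) \<Rightarrow> ('b \<Rightarrow>\<^sub>0 'k)" where
  "lin f v = (\<Sum>a\<in>Poly_Mapping.keys v. smult (Poly_Mapping.lookup v a) (f a))"

definition lin_scalar :: "('a \<Rightarrow> 'k::comm_ring_1) \<Rightarrow> ('a \<Rightarrow>\<^sub>0 'k) \<Rightarrow> 'k" where
  "lin_scalar f v = (\<Sum>a\<in>Poly_Mapping.keys v. Poly_Mapping.lookup v a * f a)"

definition bilin :: "('a \<Rightarrow> 'b \<Rightarrow> ('c \<Rightarrow>\<^sub>0 'k::comm_ring_1)) \<Rightarrow> ('a \<Rightarrow>\<^sub>0 'k) \<Rightarrow> ('b \<Rightarrow>\<^sub>0 'k) \<Rightarrow> ('c \<Rightarrow>\<^sub>0 'k)" where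
  "bilin f u v = lin (\<lambda>a. lin (\<lambda>b. f a b) v) u"

definition tensor :: "('a \<Rightarrow>\<^sub>0 'k::comm_ring_1) \<Rightarrow> ('b \<Rightarrow>\<^sub>0 'k) \<Rightarrow> ('a \<times> 'b \<Rightarrow>\<^sub>0 'k)" where
  "tensor u v = bilin (\<lambda>a b. bas (a, b)) u v"

text \<open>Data: multiplication of basis elements mult, unit element one (= u(1)),
  coproduct of basis elements comult (valued in A \<otimes> A), counit of basis elements counit.\<close>

definition is_bialgebra ::
  "('a \<Rightarrow> 'a \<Rightarrow> ('a \<Rightarrow>\<^sub>0 'k::comm_ring_1)) \<Rightarrow> ('a \<Rightarrow>\<^sub>0 'k) \<Rightarrow> ('a \<Rightarrow> ('a \<times> 'a \<Rightarrow>\<^sub>0 'k)) \<Rightarrow> ('a \<Rightarrow> 'k) \<Rightarrow> bool"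
where
  "is_bialgebra mult one comult counit \<longleftrightarrow>
     \<comment> \<open>associativity\<close>
     (\<forall>a b c. bilin mult (mult a b) (bas c) = bilin mult (bas a) (mult b c)) \<and>
     \<comment> \<open>unit\<close>
     (\<forall>a. bilin mult one (bas a) = bas a \<and> bilin mult (bas a) one = bas a) \<and>
     \<comment> \<open>coassociativity\<close>
     (\<forall>a. lin (\<lambda>(x, y). lin (\<lambda>(p, q). bas (p, q, y)) (comult x)) (comult a)
        = lin (\<lambda>(x, y). lin (\<lambda>(p, q). bas (x, p, q)) (comult y)) (comult a)) \<and>
     \<comment> \<open>counit\<close>
     (\<forall>a. lin (\<lambda>(x, y). smult (counit x) (bas y)) (comult a) = bas a \<and>
          lin (\<lambda>(x, y). smult (counit y) (bas x)) (comult a) = bas a) \<and>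
     \<comment> \<open>coproduct is an algebra morphism A \<rightarrow> A \<otimes> A\<close>
     (\<forall>a b. lin comult (mult a b)
        = bilin (\<lambda>(x, y) (x', y'). tensor (mult x x') (mult y y')) (comult a) (comult b)) \<and>
     lin comult one = tensor one one \<and>
     \<comment> \<open>counit is an algebra morphism A \<rightarrow> k\<close>
     (\<forall>a b. lin_scalar counit (mult a b) = counit a * counit b) \<and>
     lin_scalar counit one = 1"

definition is_antipode ::
  "('a \<Rightarrow> 'a \<Rightarrow> ('a \<Rightarrow>\<^sub>0 'k::comm_ring_1)) \<Rightarrow> ('a \<Rightarrow>\<^sub>0 'k) \<Rightarrow> ('a \<Rightarrow> ('a \<times> 'a \<Rightarrow>\<^sub>0 'k)) \<Rightarrow> ('a \<Rightarrow> 'k)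
    \<Rightarrow> ('a \<Rightarrow> ('a \<Rightarrow>\<^sub>0 'k)) \<Rightarrow> bool"
where
  "is_antipode mult one comult counit S \<longleftrightarrow>
     (\<forall>a. lin (\<lambda>(x, y). bilin mult (S x) (bas y)) (comult a) = smult (counit a) one \<and>
          lin (\<lambda>(x, y). bilin mult (bas x) (S y)) (comult a) = smult (counit a) one)"

definition is_hopf_algebra ::
  "('a \<Rightarrow> 'a \<Rightarrow> ('a \<Rightarrow>\<^sub>0 'k::comm_ring_1)) \<Rightarrow> ('a \<Rightarrow>\<^sub>0 'k) \<Rightarrow> ('a \<Rightarrow> ('a \<times> 'a \<Rightarrow>\<^sub>0 'k)) \<Rightarrow> ('a \<Rightarrow> 'k) \<Rightarrow> bool"
where
  "is_hopf_algebra mult one comult counit \<longleftrightarrow>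
     is_bialgebra mult one comult counit \<and> (\<exists>S. is_antipode mult one comult counit S)"

text \<open>A tree is the one-vertex tree Leaf or B+(F) = Node F.  A forest T1 x1 T2 ... x(k-1) Tk
  is Forest T1 [(x1,T2), ..., (x(k-1),Tk)]; a tree T, as a forest, is Forest T [].\<close>

datatype 'x tree = Leaf | Node "'x forest"
     and 'x forest = Forest "'x tree" "('x \<times> 'x tree) list"

fun ffirst :: "'x forest \<Rightarrow> 'x tree" where
  "ffirst (Forest t ps) = t"

fun flast :: "'x forest \<Rightarrow> 'x tree" where
  "flast (Forest t ps) = (if ps = [] then t else snd (last ps))"

fun set_first :: "'x forest \<Rightarrow> 'x tree \<Rightarrow> 'x forest" where
  "set_first (Forest t ps) T = Forest T ps"

fun set_last :: "'x forest \<Rightarrow> 'x tree \<Rightarrow> 'x forest" where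
  "set_last (Forest t ps) T =
     (if ps = [] then Forest T [] else Forest t (butlast ps @ [(fst (last ps), T)]))"

text \<open>join F G T: the forest F1 x1 ... x(m-1) T y1 G2 ... y(n-1) Gn.\<close>
fun join :: "'x forest \<Rightarrow> 'x forest \<Rightarrow> 'x tree \<Rightarrow> 'x forest" where
  "join (Forest t ps) (Forest t' qs) T =
     (if ps = [] then Forest T qs else Forest t (butlast ps @ [(fst (last ps), T)] @ qs))"

lemma size_flast_le: "size (flast F) \<le> size F"
proof (cases F)
  case (Forest t ps)
  show ?thesis
  proof (cases "ps = []")
    case False
    then have "last ps \<in> set ps" by simp
    moreover obtain a b where "last ps = (a, b)" by (cases "last ps")
    ultimately have "size b \<le> size_list (size_prod (\<lambda>_. 0) size) ps"
      by (intro size_list_estimation'[of "(a, b)"]) auto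
    then show ?thesis using Forest False \<open>last ps = (a, b)\<close> by simp
  qed (simp add: Forest)
qed

lemma size_ffirst_le: "size (ffirst F) \<le> size F"
  by (cases F) simp

function tprod :: "'k::comm_ring_1 \<Rightarrow> 'x tree \<Rightarrow> 'x tree \<Rightarrow> ('x tree \<Rightarrow>\<^sub>0 'k)" where
  "tprod lam Leaf T = bas T"
| "tprod lam (Node F) Leaf = bas (Node F)"
| "tprod lam (Node F) (Node G) =
      lin (\<lambda>T. bas (Node (set_first G T))) (tprod lam (Node F) (ffirst G))
    + lin (\<lambda>T. bas (Node (set_last F T))) (tprod lam (flast F) (Node G))
    + smult lam (lin (\<lambda>T. bas (Node (join F G T))) (tprod lam (flast F) (ffirst G)))"
  by pat_completeness auto
termination
  by (relation "measure (\<lambda>(_, a, b). size a + size b)")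
     (auto simp: le_imp_less_Suc size_ffirst_le size_flast_le
        intro: add_mono le_imp_less_Suc less_SucI
        le_less_trans[OF add_mono[OF size_flast_le size_ffirst_le]])

definition fprod :: "'k::comm_ring_1 \<Rightarrow> 'x forest \<Rightarrow> 'x forest \<Rightarrow> ('x forest \<Rightarrow>\<^sub>0 'k)" where
  "fprod lam F G = lin (\<lambda>T. bas (join F G T)) (tprod lam (flast F) (ffirst G))"

definition dot :: "'x forest" where
  "dot = Forest Leaf []"

definition counit_a :: "'x forest \<Rightarrow> 'k::comm_ring_1" where
  "counit_a F = (if F = dot then 1 else 0)"

text \<open>Pieces of an admissible subforest: a rooted subtree F_v (v non-leaf) or a decoration
  occurrence.  The quotient skeleton is a word in which chosen rooted subtrees have been
  replaced by a leaf and chosen decorations by the symbol star (None).\<close>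

datatype 'x piece = PTree "'x tree" | PDec 'x

datatype 'x qtree = QLeaf | QNode "'x qforest"
     and 'x qforest = QForest "'x qtree" "('x option \<times> 'x qtree) list"

text \<open>Enumeration of all admissible subforests H (listed left to right) together with the
  corresponding word obtained from F by the replacements; each admissible subforest occurs
  exactly once.\<close>
fun choices_t :: "'x tree \<Rightarrow> ('x piece list \<times> 'x qtree) list"
and choices_f :: "'x forest \<Rightarrow> ('x piece list \<times> 'x qforest) list"
and choices_ps :: "('x \<times> 'x tree) list \<Rightarrow> ('x piece list \<times> ('x option \<times> 'x qtree) list) list"
where
  "choices_t Leaf = [([], QLeaf)]"
| "choices_t (Node F) = ([PTree (Node F)], QLeaf) # map (\<lambda>(H, q). (H, QNode q)) (choices_f F)"
| "choices_f (Forest t ps) =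
     concat (map (\<lambda>(H, q). map (\<lambda>(H', qs). (H @ H', QForest q qs)) (choices_ps ps)) (choices_t t))"
| "choices_ps [] = [([], [])]"
| "choices_ps ((x, t) # ps) =
     concat (map (\<lambda>(D, s). concat (map (\<lambda>(H, q). map (\<lambda>(H', qs). (D @ H @ H', (s, q) # qs))
        (choices_ps ps)) (choices_t t))) [([], Some x), ([PDec x], None)])"

definition as_forest :: "('x tree \<Rightarrow>\<^sub>0 'k::comm_ring_1) \<Rightarrow> ('x forest \<Rightarrow>\<^sub>0 'k)" where
  "as_forest v = lin (\<lambda>T. bas (Forest T [])) v"

definition cdec :: "'x option \<Rightarrow> ('x forest \<Rightarrow>\<^sub>0 'k::comm_ring_1)" where
  "cdec s = (case s of Some x \<Rightarrow> bas (Forest Leaf [(x, Leaf)]) | None \<Rightarrow> bas dot)"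

fun eval_t :: "'k::comm_ring_1 \<Rightarrow> 'x qtree \<Rightarrow> ('x tree \<Rightarrow>\<^sub>0 'k)"
and eval_f :: "'k::comm_ring_1 \<Rightarrow> 'x qforest \<Rightarrow> ('x forest \<Rightarrow>\<^sub>0 'k)"
and eval_ps :: "'k::comm_ring_1 \<Rightarrow> ('x forest \<Rightarrow>\<^sub>0 'k) \<Rightarrow> ('x option \<times> 'x qtree) list \<Rightarrow> ('x forest \<Rightarrow>\<^sub>0 'k)"
where
  "eval_t lam QLeaf = bas Leaf"
| "eval_t lam (QNode W) = lin (\<lambda>F. bas (Node F)) (eval_f lam W)"
| "eval_f lam (QForest q qs) = eval_ps lam (as_forest (eval_t lam q)) qs"
| "eval_ps lam acc [] = acc"
| "eval_ps lam acc ((s, q) # qs) =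
     eval_ps lam (bilin (fprod lam) (bilin (fprod lam) acc (cdec s)) (as_forest (eval_t lam q))) qs"

definition hat :: "'x piece \<Rightarrow> ('x forest \<Rightarrow>\<^sub>0 'k::comm_ring_1)" where
  "hat p = (case p of PTree T \<Rightarrow> bas (Forest T []) | PDec x \<Rightarrow> bas (Forest Leaf [(x, Leaf)]))"

definition closure :: "'k::comm_ring_1 \<Rightarrow> 'x piece list \<Rightarrow> ('x forest \<Rightarrow>\<^sub>0 'k)" where
  "closure lam H = (case H of [] \<Rightarrow> bas dot
     | h # hs \<Rightarrow> foldl (\<lambda>acc p. bilin (fprod lam) acc (hat p)) (hat h) hs)"

definition coprod_a :: "'k::comm_ring_1 \<Rightarrow> 'x forest \<Rightarrow> ('x forest \<times> 'x forest \<Rightarrow>\<^sub>0 'k)" where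
  "coprod_a lam F = sum_list (map (\<lambda>(H, q). tensor (closure lam H) (eval_f lam q)) (choices_f F))"

end

theory Submission
  imports Defs
begin

text \<open>
  The recursive definition of the product of trees says that B+ is a Rota-Baxter operator of
  weight \<open>lam\<close>: \<open>B+ u \<diamond> B+ v = B+ (B+ u \<diamond> v + u \<diamond> B+ v + lam u \<diamond> v)\<close>.  Associativity of
  \<open>\<diamond>\<close> follows from this identity by induction on the size of forests.

  A forest \<open>T\<^sub>1 x\<^sub>1 T\<^sub>2 \<dots> T\<^sub>k\<close> is the product \<open>T\<^sub>1 \<diamond> \<bullet>x\<^sub>1\<bullet> \<diamond> T\<^sub>2 \<diamond> \<dots> \<diamond> T\<^sub>k\<close>, and its coproduct is
  the corresponding product, in the tensor square, of the coproducts of the pieces: \<open>\<bullet>x\<bullet>\<close> is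
  primitive and \<open>\<Delta> (B+ F) = B+ F \<otimes> \<bullet> + (id \<otimes> B+) (\<Delta> F)\<close>.  As \<open>id \<otimes> B+\<close> is again a
  Rota-Baxter operator, induction on size shows that \<open>\<Delta>\<close> is multiplicative, coassociative and
  counital.

  The bialgebra is connected for the grading by size: apart from \<open>F \<otimes> \<bullet>\<close> (resp. \<open>\<bullet> \<otimes> F\<close>)
  every term of \<open>\<Delta> F\<close> has a left (resp. right) factor of smaller grade.  Hence left and right
  convolution inverses of the identity can be defined by recursion on the grade, and by
  associativity of convolution they coincide.
\<close>

section \<open>Linear and bilinear extensions\<close>

lemma lookup_smult [simp]: "Poly_Mapping.lookup (smult c v) a = c * Poly_Mapping.lookup v a"
  unfolding smult_def by (simp add: Poly_Mapping.map.rep_eq when_def)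

lemma smult_add_right [simp]: "smult c (u + v) = smult c u + smult c v"
  by (rule poly_mapping_eqI) (simp add: lookup_add algebra_simps)

lemma smult_add_left: "smult (c + d) v = smult c v + smult d v"
  by (rule poly_mapping_eqI) (simp add: lookup_add algebra_simps)

lemma smult_smult [simp]: "smult c (smult d v) = smult (c * d) v"
  by (rule poly_mapping_eqI) (simp add: algebra_simps)

lemma smult_one [simp]: "smult 1 v = v"
  by (rule poly_mapping_eqI) simp

lemma smult_zero_left [simp]: "smult 0 v = 0"
  by (rule poly_mapping_eqI) simp

lemma smult_zero_right [simp]: "smult c 0 = 0"
  by (rule poly_mapping_eqI) simp

lemma smult_sum: "smult c (sum f A) = (\<Sum>a\<in>A. smult c (f a))"
  by (induction A rule: infinite_finite_induct) auto

lemma keys_smult: "Poly_Mapping.keys (smult c v) \<subseteq> Poly_Mapping.keys v"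
  by (auto simp: in_keys_iff)

lemma keys_bas [simp]: "Poly_Mapping.keys (bas a :: 'a \<Rightarrow>\<^sub>0 'k::comm_ring_1) = {a}"
  by (simp add: bas_def)

lemma lookup_bas: "Poly_Mapping.lookup (bas a) b = (if a = b then 1 else 0)"
  by (simp add: bas_def lookup_single when_def)

lemma lin_eq_sum_superset:
  assumes "finite A" "Poly_Mapping.keys v \<subseteq> A"
  shows "lin f v = (\<Sum>a\<in>A. smult (Poly_Mapping.lookup v a) (f a))"
  unfolding lin_def
  by (rule sum.mono_neutral_left) (use assms in \<open>auto simp: in_keys_iff\<close>)

lemma lin_zero [simp]: "lin f 0 = 0"
  by (simp add: lin_def)

lemma lin_bas [simp]: "lin f (bas a) = f a"
  by (simp add: lin_def bas_def)

lemma lin_add [simp]: "lin f (u + v) = lin f u + lin f v"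
proof -
  let ?A = "Poly_Mapping.keys u \<union> Poly_Mapping.keys v"
  have A: "finite ?A" by simp
  have "lin f (u + v) = (\<Sum>a\<in>?A. smult (Poly_Mapping.lookup (u + v) a) (f a))"
    by (rule lin_eq_sum_superset[OF A]) (simp add: keys_add)
  also have "\<dots> = (\<Sum>a\<in>?A. smult (Poly_Mapping.lookup u a) (f a))
      + (\<Sum>a\<in>?A. smult (Poly_Mapping.lookup v a) (f a))"
    by (simp add: lookup_add smult_add_left sum.distrib)
  also have "\<dots> = lin f u + lin f v"
    by (simp add: lin_eq_sum_superset[OF A])
  finally show ?thesis .
qed

lemma lin_smult [simp]: "lin f (smult c v) = smult c (lin f v)"
proof -
  have "lin f (smult c v)
      = (\<Sum>a\<in>Poly_Mapping.keys v. smult (Poly_Mapping.lookup (smult c v) a) (f a))"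
    by (rule lin_eq_sum_superset) (auto simp: keys_smult)
  also have "\<dots> = smult c (lin f v)"
    by (simp only: lin_def smult_sum lookup_smult smult_smult)
  finally show ?thesis .
qed

lemma lin_sum_list: "lin f (sum_list xs) = sum_list (map (lin f) xs)"
  by (induction xs) simp_all

lemma lin_cong: "(\<And>a. a \<in> Poly_Mapping.keys v \<Longrightarrow> f a = g a) \<Longrightarrow> lin f v = lin g v"
  by (simp add: lin_def)

lemma lin_fundef_cong [fundef_cong]:
  "v = w \<Longrightarrow> (\<And>a. a \<in> Poly_Mapping.keys w \<Longrightarrow> f a = g a) \<Longrightarrow> lin f v = lin g w"
  by (simp add: lin_def)

lemma keys_lin: "Poly_Mapping.keys (lin f v) \<subseteq> (\<Union>a\<in>Poly_Mapping.keys v. Poly_Mapping.keys (f a))"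
proof -
  have "Poly_Mapping.keys (lin f v)
      \<subseteq> (\<Union>a\<in>Poly_Mapping.keys v. Poly_Mapping.keys (smult (Poly_Mapping.lookup v a) (f a)))"
    unfolding lin_def by (rule Poly_Mapping.keys_sum)
  also have "\<dots> \<subseteq> (\<Union>a\<in>Poly_Mapping.keys v. Poly_Mapping.keys (f a))"
    by (intro UN_mono subset_refl keys_smult)
  finally show ?thesis .
qed

lemma lin_fun_add: "lin (\<lambda>a. f a + g a) v = lin f v + lin g v"
  by (simp add: lin_def sum.distrib)

lemma lin_fun_smult: "lin (\<lambda>a. smult c (f a)) v = smult c (lin f v)"
  by (simp add: lin_def smult_sum mult.commute)

lemma lin_fun_zero [simp]: "lin (\<lambda>a. 0) v = 0"
  by (simp add: lin_def)

lemma sum_keys_smult_bas: "(\<Sum>a\<in>Poly_Mapping.keys v. smult (Poly_Mapping.lookup v a) (bas a)) = v"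
proof -
  have "finite I \<Longrightarrow> Poly_Mapping.lookup (\<Sum>a\<in>I. smult (Poly_Mapping.lookup v a) (bas a)) j
      = (if j \<in> I then Poly_Mapping.lookup v j else 0)" for I j
    by (induction I rule: finite_induct) (auto simp: lookup_add lookup_bas)
  then show ?thesis
    by (intro poly_mapping_eqI) (auto simp: in_keys_iff)
qed

lemma lin_bas_self [simp]: "lin bas v = v"
  by (simp add: lin_def sum_keys_smult_bas)

lemma bas_induct [case_names zero single add]:
  assumes "P 0" "\<And>c a. P (smult c (bas a))" "\<And>u v. P u \<Longrightarrow> P v \<Longrightarrow> P (u + v)"
  shows "P v"
proof -
  have "P (\<Sum>a\<in>I. smult (Poly_Mapping.lookup v a) (bas a))" if "finite I" for I
    using that by (induction I rule: finite_induct) (simp_all add: assms)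
  then show ?thesis
    using sum_keys_smult_bas[of v] by (metis finite_keys)
qed

lemma lin_lin: "lin g (lin f v) = lin (\<lambda>a. lin g (f a)) v"
  by (induction v rule: bas_induct) simp_all

lemma bilin_bas [simp]: "bilin f (bas a) (bas b) = f a b"
  by (simp add: bilin_def)

lemma bilin_bas_left: "bilin f (bas a) v = lin (f a) v"
  by (simp add: bilin_def)

lemma bilin_bas_right: "bilin f u (bas b) = lin (\<lambda>a. f a b) u"
  by (simp add: bilin_def)

lemma bilin_add_left [simp]: "bilin f (u + u') v = bilin f u v + bilin f u' v"
  by (simp add: bilin_def)

lemma bilin_add_right [simp]: "bilin f u (v + v') = bilin f u v + bilin f u v'"
  by (simp add: bilin_def lin_fun_add)

lemma bilin_smult_left [simp]: "bilin f (smult c u) v = smult c (bilin f u v)"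
  by (simp add: bilin_def)

lemma bilin_smult_right [simp]: "bilin f u (smult c v) = smult c (bilin f u v)"
  by (simp add: bilin_def lin_fun_smult)

lemma bilin_zero_left [simp]: "bilin f 0 v = 0"
  by (simp add: bilin_def)

lemma bilin_zero_right [simp]: "bilin f u 0 = 0"
  by (simp add: bilin_def)

lemma bilin_swap: "bilin f u v = lin (\<lambda>b. lin (\<lambda>a. f a b) u) v"
  by (induction u rule: bas_induct) (simp_all add: lin_fun_add lin_fun_smult bilin_bas_left)

lemma bilin_cong:
  "(\<And>a b. a \<in> Poly_Mapping.keys u \<Longrightarrow> b \<in> Poly_Mapping.keys v \<Longrightarrow> f a b = g a b)
    \<Longrightarrow> bilin f u v = bilin g u v"
  unfolding bilin_def by (intro lin_cong) auto

lemma keys_bilin: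
  "Poly_Mapping.keys (bilin f u v)
    \<subseteq> (\<Union>a\<in>Poly_Mapping.keys u. \<Union>b\<in>Poly_Mapping.keys v. Poly_Mapping.keys (f a b))"
proof -
  have "Poly_Mapping.keys (bilin f u v) \<subseteq> (\<Union>a\<in>Poly_Mapping.keys u. Poly_Mapping.keys (lin (f a) v))"
    unfolding bilin_def by (rule keys_lin)
  also have "\<dots> \<subseteq> (\<Union>a\<in>Poly_Mapping.keys u. \<Union>b\<in>Poly_Mapping.keys v. Poly_Mapping.keys (f a b))"
    by (intro UN_mono subset_refl keys_lin)
  finally show ?thesis .
qed

lemma lin_bilin: "lin h (bilin f u v) = bilin (\<lambda>a b. lin h (f a b)) u v"
  by (simp add: bilin_def lin_lin)

lemma bilin_lin_left: "bilin f (lin g u) v = lin (\<lambda>a. bilin f (g a) v) u"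
  by (simp add: bilin_def lin_lin)

lemma bilin_lin_right: "bilin f u (lin g v) = lin (\<lambda>b. bilin f u (g b)) v"
  by (simp add: bilin_swap[of f u] lin_lin)

lemma tensor_bas [simp]: "tensor (bas a) (bas b) = bas (a, b)"
  by (simp add: tensor_def)

lemma tensor_add_left [simp]: "tensor (u + u') v = tensor u v + tensor u' v"
  by (simp add: tensor_def)

lemma tensor_add_right [simp]: "tensor u (v + v') = tensor u v + tensor u v'"
  by (simp add: tensor_def)

lemma tensor_smult_left [simp]: "tensor (smult c u) v = smult c (tensor u v)"
  by (simp add: tensor_def)

lemma tensor_smult_right [simp]: "tensor u (smult c v) = smult c (tensor u v)"
  by (simp add: tensor_def)

lemma tensor_zero_left [simp]: "tensor 0 v = 0"
  by (simp add: tensor_def)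

lemma tensor_zero_right [simp]: "tensor u 0 = 0"
  by (simp add: tensor_def)

lemma tensor_bas_left: "tensor (bas a) v = lin (\<lambda>b. bas (a, b)) v"
  by (simp add: tensor_def bilin_bas_left)

lemma keys_tensor: "Poly_Mapping.keys (tensor u v) \<subseteq> Poly_Mapping.keys u \<times> Poly_Mapping.keys v"
  unfolding tensor_def using keys_bilin[of "\<lambda>a b. bas (a, b)" u v] by auto

section \<open>Grafting and the product of forests\<close>

type_synonym ('x, 'k) kF = "'x forest \<Rightarrow>\<^sub>0 'k"
type_synonym ('x, 'k) kF2 = "'x forest \<times> 'x forest \<Rightarrow>\<^sub>0 'k"
type_synonym ('x, 'k) kF3 = "'x forest \<times> 'x forest \<times> 'x forest \<Rightarrow>\<^sub>0 'k"

abbreviation fmul :: "'k::comm_ring_1 \<Rightarrow> ('x, 'k) kF \<Rightarrow> ('x, 'k) kF \<Rightarrow> ('x, 'k) kF"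
  where "fmul lam \<equiv> bilin (fprod lam)"

abbreviation tree_mul :: "'k::comm_ring_1 \<Rightarrow> ('x tree \<Rightarrow>\<^sub>0 'k) \<Rightarrow> ('x tree \<Rightarrow>\<^sub>0 'k) \<Rightarrow> ('x tree \<Rightarrow>\<^sub>0 'k)"
  where "tree_mul lam \<equiv> bilin (tprod lam)"

abbreviation bplus :: "('x, 'k::comm_ring_1) kF \<Rightarrow> ('x tree \<Rightarrow>\<^sub>0 'k)"
  where "bplus \<equiv> lin (\<lambda>F. bas (Node F))"

lemma as_forest_bas [simp]: "as_forest (bas T) = bas (Forest T [])"
  by (simp add: as_forest_def)

lemma as_forest_add [simp]: "as_forest (u + v) = as_forest u + as_forest v"
  by (simp add: as_forest_def)

lemma as_forest_smult [simp]: "as_forest (smult c u) = smult c (as_forest u)"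
  by (simp add: as_forest_def)

lemma as_forest_zero [simp]: "as_forest 0 = 0"
  by (simp add: as_forest_def)

lemma set_first_dot [simp]: "set_first dot T = Forest T []"
  by (simp add: dot_def)

lemma set_last_dot [simp]: "set_last dot T = Forest T []"
  by (simp add: dot_def)

lemma join_Nil_right: "join F (Forest t []) T = set_last F T"
  by (cases F) auto

lemma join_Nil_left: "join (Forest t []) G T = set_first G T"
  by (cases G) auto

lemma join_dot_right [simp]: "join F dot T = set_last F T"
  unfolding dot_def by (rule join_Nil_right)

lemma join_dot_left [simp]: "join dot G T = set_first G T"
  unfolding dot_def by (rule join_Nil_left)

lemma flast_set_last [simp]: "flast (set_last F T) = T"
  by (cases F) auto

lemma ffirst_set_first [simp]: "ffirst (set_first F T) = T"
  by (cases F) auto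

lemma set_last_flast [simp]: "set_last F (flast F) = F"
  by (cases F) auto

lemma set_first_ffirst [simp]: "set_first G (ffirst G) = G"
  by (cases G) auto

lemma join_set_last [simp]: "join (set_last F T) H T' = join F H T'"
  by (cases F; cases H) auto

lemma join_set_first [simp]: "join F (set_first H T) T' = join F H T'"
  by (cases F; cases H) auto

lemma flast_join: "qs \<noteq> [] \<Longrightarrow> flast (join F (Forest g qs) T) = flast (Forest g qs)"
  by (cases F) auto

lemma ffirst_join: "ps \<noteq> [] \<Longrightarrow> ffirst (join (Forest t ps) G T) = t"
  by (cases G) auto

lemma join_join:
  "qs \<noteq> [] \<Longrightarrow> join (join F (Forest g qs) T) H T' = join F (join (Forest g qs) H T') T"
  by (cases F; cases H) (auto simp: butlast_append)

lemma size_flast_less: "size (flast F) < size F"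
proof (cases F)
  case (Forest t ps)
  show ?thesis
  proof (cases "ps = []")
    case False
    then have "last ps \<in> set ps" by simp
    moreover obtain a b where "last ps = (a, b)" by (cases "last ps")
    ultimately have "size b \<le> size_list (size_prod (\<lambda>_. 0) size) ps"
      by (intro size_list_estimation'[of "(a, b)"]) auto
    then show ?thesis using Forest False \<open>last ps = (a, b)\<close> by simp
  qed (simp add: Forest)
qed

lemma size_ffirst_less: "size (ffirst F) < size F"
  by (cases F) auto

lemma tprod_Leaf_right [simp]: "tprod lam T Leaf = bas T"
  by (cases T) auto

lemma tree_mul_Leaf_left [simp]: "tree_mul lam (bas Leaf) v = v"
proof -
  have leaf: "tprod lam Leaf = bas"
    by (rule ext) simp
  show ?thesis
    by (simp only: leaf bilin_bas_left lin_bas_self)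
qed

lemma tree_mul_Leaf_right [simp]: "tree_mul lam u (bas Leaf) = u"
  by (simp add: bilin_bas_right)

lemma tprod_Node_Node:
  "tprod lam (Node F) (Node G) = bplus (fprod lam (Forest (Node F) []) G
     + fprod lam F (Forest (Node G) []) + smult lam (fprod lam F G))"
  by (simp add: fprod_def lin_lin join_Nil_left join_Nil_right)

declare tprod.simps(3) [simp del]

lemma tree_mul_bplus_bplus:
  "tree_mul lam (bplus u) (bplus v) = bplus (fmul lam (as_forest (bplus u)) v
     + fmul lam u (as_forest (bplus v)) + smult lam (fmul lam u v))"
proof (induction u rule: bas_induct)
  case (single c a)
  show ?case
  proof (induction v rule: bas_induct)
    case (single d b)
    then show ?case
      by (simp add: tprod_Node_Node mult_ac)
  qed (simp_all add: algebra_simps)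
qed (simp_all add: algebra_simps)

lemma as_forest_tree_mul: "as_forest (tree_mul lam u v) = fmul lam (as_forest u) (as_forest v)"
proof -
  have "as_forest (tree_mul lam u v) = bilin (\<lambda>a b. as_forest (tprod lam a b)) u v"
    by (simp add: as_forest_def lin_bilin)
  also have "\<dots> = bilin (\<lambda>a b. fprod lam (Forest a []) (Forest b [])) u v"
    by (rule bilin_cong) (simp add: fprod_def as_forest_def)
  also have "\<dots> = fmul lam (as_forest u) (as_forest v)"
    by (simp add: as_forest_def bilin_def lin_lin)
  finally show ?thesis .
qed

lemma fprod_Node_Node:
  "fprod lam (Forest (Node F) []) (Forest (Node G) []) = as_forest (bplus (fprod lam (Forest (Node F) []) G
     + fprod lam F (Forest (Node G) []) + smult lam (fprod lam F G)))"
  using as_forest_tree_mul[of lam "bas (Node F)" "bas (Node G)"] by (simp add: tprod_Node_Node)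

lemma fprod_dot_left [simp]: "fprod lam dot G = bas G"
  by (cases G) (simp add: fprod_def dot_def)

lemma fprod_dot_right [simp]: "fprod lam F dot = bas F"
  by (simp add: fprod_def dot_def join_Nil_right)

lemma fmul_dot_left [simp]: "fmul lam (bas dot) u = u"
proof -
  have leaf: "fprod lam dot = bas"
    by (rule ext) simp
  show ?thesis
    by (simp only: leaf bilin_bas_left lin_bas_self)
qed

lemma fmul_dot_right [simp]: "fmul lam u (bas dot) = u"
  by (simp add: bilin_bas_right)

lemma fprod_assoc_long_middle:
  assumes "qs \<noteq> []"
  shows "fmul lam (fprod lam F (Forest g qs)) (bas H) = fmul lam (bas F) (fprod lam (Forest g qs) H)"
proof -
  let ?G = "Forest g qs"
  let ?X = "tprod lam (flast F) g" and ?Y = "tprod lam (flast ?G) (ffirst H)"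
  have "fmul lam (fprod lam F ?G) (bas H) = lin (\<lambda>T. fprod lam (join F ?G T) H) ?X"
    by (simp add: fprod_def bilin_lin_left)
  also have "\<dots> = lin (\<lambda>T. lin (\<lambda>T'. bas (join F (join ?G H T') T)) ?Y) ?X"
    by (rule lin_cong) (simp add: fprod_def flast_join[OF assms] join_join[OF assms])
  also have "\<dots> = lin (\<lambda>T'. lin (\<lambda>T. bas (join F (join ?G H T') T)) ?X) ?Y"
    using bilin_swap[of "\<lambda>T T'. bas (join F (join ?G H T') T)" ?X ?Y] by (simp add: bilin_def)
  also have "\<dots> = fmul lam (bas F) (fprod lam ?G H)"
    by (simp add: fprod_def bilin_lin_right bilin_bas_left ffirst_join[OF assms])
  finally show ?thesis .
qed

lemma fprod_assoc_tree_middle: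
  assumes "tree_mul lam (tprod lam (flast F) g) (bas (ffirst H))
    = tree_mul lam (bas (flast F)) (tprod lam g (ffirst H))"
  shows "fmul lam (fprod lam F (Forest g [])) (bas H) = fmul lam (bas F) (fprod lam (Forest g []) H)"
proof -
  let ?K = "\<lambda>T. bas (join F H T)"
  have "fmul lam (fprod lam F (Forest g [])) (bas H)
      = lin (\<lambda>T. lin ?K (tprod lam T (ffirst H))) (tprod lam (flast F) g)"
    by (simp add: fprod_def bilin_lin_left join_Nil_right)
  also have "\<dots> = lin ?K (tree_mul lam (tprod lam (flast F) g) (bas (ffirst H)))"
    by (simp add: lin_lin bilin_bas_right)
  also have "\<dots> = lin ?K (tree_mul lam (bas (flast F)) (tprod lam g (ffirst H)))"
    by (simp only: assms)
  also have "\<dots> = lin (\<lambda>T. lin ?K (tprod lam (flast F) T)) (tprod lam g (ffirst H))"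
    by (simp add: lin_lin bilin_bas_left)
  also have "\<dots> = fmul lam (bas F) (fprod lam (Forest g []) H)"
    by (simp add: fprod_def bilin_lin_right join_Nil_left)
  finally show ?thesis .
qed

lemma tprod_assoc_Node:
  fixes a b c :: "'x forest"
  assumes IH: "\<And>F G H :: 'x forest. size F + size G + size H < size a + size b + size c + 6 \<Longrightarrow>
      fmul lam (fprod lam F G) (bas H) = fmul lam (bas F) (fprod lam G H)"
  shows "tree_mul lam (tprod lam (Node a) (Node b)) (bas (Node c))
    = tree_mul lam (bas (Node a)) (tprod lam (Node b) (Node c))"
proof -
  let ?a = "Forest (Node a) []" and ?b = "Forest (Node b) []" and ?c = "Forest (Node c) []"
  define w where "w = fprod lam ?a b + fprod lam a ?b + smult lam (fprod lam a b)"
  define v where "v = fprod lam ?b c + fprod lam b ?c + smult lam (fprod lam b c)"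
  have "tree_mul lam (tprod lam (Node a) (Node b)) (bas (Node c)) = tree_mul lam (bplus w) (bplus (bas c))"
    by (simp only: tprod_Node_Node w_def lin_bas)
  also have "\<dots> = bplus (fmul lam (as_forest (bplus w)) (bas c)
      + fmul lam w (as_forest (bplus (bas c))) + smult lam (fmul lam w (bas c)))"
    by (rule tree_mul_bplus_bplus)
  also have "as_forest (bplus w) = fprod lam ?a ?b"
    by (simp only: w_def fprod_Node_Node)
  finally have L: "tree_mul lam (tprod lam (Node a) (Node b)) (bas (Node c))
      = bplus (fmul lam (fprod lam ?a ?b) (bas c) + fmul lam w (bas ?c) + smult lam (fmul lam w (bas c)))"
    by (simp only: lin_bas as_forest_bas)
  have "tree_mul lam (bas (Node a)) (tprod lam (Node b) (Node c)) = tree_mul lam (bplus (bas a)) (bplus v)"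
    by (simp only: tprod_Node_Node v_def lin_bas)
  also have "\<dots> = bplus (fmul lam (as_forest (bplus (bas a))) v
      + fmul lam (bas a) (as_forest (bplus v)) + smult lam (fmul lam (bas a) v))"
    by (rule tree_mul_bplus_bplus)
  also have "as_forest (bplus v) = fprod lam ?b ?c"
    by (simp only: v_def fprod_Node_Node)
  finally have R: "tree_mul lam (bas (Node a)) (tprod lam (Node b) (Node c))
      = bplus (fmul lam (bas ?a) v + fmul lam (bas a) (fprod lam ?b ?c) + smult lam (fmul lam (bas a) v))"
    by (simp only: lin_bas as_forest_bas)
  \<comment> \<open>Expanded, both sides are sums of seven terms that match pairwise by \<open>IH\<close>.\<close>
  show ?thesis
    unfolding L R w_def v_def by (simp add: IH algebra_simps)
qed

lemma fprod_assoc: "fmul lam (fprod lam F G) (bas H) = fmul lam (bas F) (fprod lam G H)"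
proof (induction "size F + size G + size H" arbitrary: F G H rule: less_induct)
  case less
  obtain g qs where G: "G = Forest g qs"
    by (cases G)
  show ?case
  proof (cases "qs = []")
    case False
    then show ?thesis
      using G fprod_assoc_long_middle by simp
  next
    case True
    have "tree_mul lam (tprod lam (flast F) g) (bas (ffirst H))
      = tree_mul lam (bas (flast F)) (tprod lam g (ffirst H))"
    proof (cases "flast F = Leaf \<or> g = Leaf \<or> ffirst H = Leaf")
      case True
      then show ?thesis
        by auto
    next
      case False
      then obtain a b c where abc: "flast F = Node a" "g = Node b" "ffirst H = Node c"
        by (metis tree.exhaust)
      have "size a + size b + size c + 6 \<le> size F + size G + size H"
        using size_flast_less[of F] size_ffirst_less[of H] abc G True by simp
      then show ?thesis
        unfolding abc by (intro tprod_assoc_Node less) simp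
    qed
    then show ?thesis
      using G True fprod_assoc_tree_middle by simp
  qed
qed

lemma fmul_assoc: "fmul lam (fmul lam u v) w = fmul lam u (fmul lam v w)"
proof (induction u rule: bas_induct)
  case (single c a)
  show ?case
  proof (induction v rule: bas_induct)
    case (single d b)
    show ?case
      by (induction w rule: bas_induct) (simp_all add: fprod_assoc mult_ac)
  qed simp_all
qed simp_all

section \<open>The angular coproduct as a product of elementary pieces\<close>

abbreviation tensor_mul ::
  "'k::comm_ring_1 \<Rightarrow> ('x, 'k) kF2 \<Rightarrow> ('x, 'k) kF2 \<Rightarrow> ('x, 'k) kF2"
  where "tensor_mul lam \<equiv> bilin (\<lambda>(x, y) (x', y'). tensor (fprod lam x x') (fprod lam y y'))"

lemma tensor_mul_tensor:
  "tensor_mul lam (tensor a b) (tensor c d) = tensor (fmul lam a c) (fmul lam b d)"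
proof (induction a rule: bas_induct)
  case (single c1 a1)
  show ?case
  proof (induction b rule: bas_induct)
    case (single c2 a2)
    show ?case
    proof (induction c rule: bas_induct)
      case (single c3 a3)
      show ?case
        by (induction d rule: bas_induct) (simp_all add: mult_ac)
    qed simp_all
  qed simp_all
qed simp_all

lemma tensor_mul_assoc: "tensor_mul lam (tensor_mul lam U V) W = tensor_mul lam U (tensor_mul lam V W)"
proof (induction U rule: bas_induct)
  case (single c1 p)
  show ?case
  proof (induction V rule: bas_induct)
    case (single c2 q)
    show ?case
    proof (induction W rule: bas_induct)
      case (single c3 r)
      obtain x y x' y' x'' y'' where "p = (x, y)" "q = (x', y')" "r = (x'', y'')"
        by (cases p; cases q; cases r)
      then show ?case
        using tensor_mul_tensor[of lam "fprod lam x x'" "fprod lam y y'" "bas x''" "bas y''"]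
          tensor_mul_tensor[of lam "bas x" "bas y" "fprod lam x' x''" "fprod lam y' y''"]
        by (simp add: fprod_assoc mult_ac)
    qed simp_all
  qed simp_all
qed simp_all

lemma tensor_mul_unit_left [simp]: "tensor_mul lam (bas (dot, dot)) U = U"
proof (induction U rule: bas_induct)
  case (single c p)
  then show ?case by (cases p) simp
qed simp_all

lemma tensor_mul_unit_right [simp]: "tensor_mul lam U (bas (dot, dot)) = U"
proof (induction U rule: bas_induct)
  case (single c p)
  then show ?case by (cases p) simp
qed simp_all

lemma closure_Nil [simp]: "closure lam [] = bas dot"
  by (simp add: closure_def)

lemma closure_single [simp]: "closure lam [p] = hat p"
  by (simp add: closure_def)

lemma closure_eq_foldl: "closure lam H = foldl (\<lambda>acc p. fmul lam acc (hat p)) (bas dot) H"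
  by (cases H) (simp_all add: closure_def)

lemma foldl_fmul_hat:
  "foldl (\<lambda>acc p. fmul lam acc (hat p)) acc H
    = fmul lam acc (foldl (\<lambda>acc p. fmul lam acc (hat p)) (bas dot) H)"
proof (induction H arbitrary: acc)
  case (Cons h H)
  show ?case
    using Cons[of "fmul lam acc (hat h)"] Cons[of "hat h"] by (simp add: fmul_assoc)
qed simp

lemma closure_append: "closure lam (H @ H') = fmul lam (closure lam H) (closure lam H')"
  by (simp add: closure_eq_foldl foldl_fmul_hat[of lam "foldl _ _ H"])

lemma eval_ps_eq_fmul: "eval_ps lam acc qs = fmul lam acc (eval_ps lam (bas dot) qs)"
proof (induction qs arbitrary: acc)
  case (Cons sq qs)
  obtain s q where "sq = (s, q)"
    by (cases sq)
  then show ?case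
    using Cons[of "fmul lam (fmul lam acc (cdec s)) (as_forest (eval_t lam q))"]
      Cons[of "fmul lam (cdec s) (as_forest (eval_t lam q))"]
    by (simp add: fmul_assoc)
qed simp

lemma sum_list_map_concat_map:
  "sum_list (map f (concat (map g xs))) = sum_list (map (\<lambda>x. sum_list (map f (g x))) xs)"
  by (induction xs) auto

lemma sum_list_map_pairs:
  "sum_list (map f (concat (map (\<lambda>(a, b). map (\<lambda>(c, d). k a b c d) ys) xs)))
     = sum_list (map (\<lambda>(a, b). sum_list (map (\<lambda>(c, d). f (k a b c d)) ys)) xs)"
  by (induction xs) (auto simp: split_def o_def)

lemma sum_list_bilin_right:
  "sum_list (map (\<lambda>(c, d). bilin f u (g c d)) ys) = bilin f u (sum_list (map (\<lambda>(c, d). g c d) ys))"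
  by (induction ys) auto

lemma sum_list_bilin_left:
  "sum_list (map (\<lambda>(c, d). bilin f (g c d) v) ys) = bilin f (sum_list (map (\<lambda>(c, d). g c d) ys)) v"
  by (induction ys) auto

lemma coprod_a_Forest_eq_tensor_mul:
  "coprod_a lam (Forest t ps) = tensor_mul lam
     (sum_list (map (\<lambda>(H, q). tensor (closure lam H) (as_forest (eval_t lam q))) (choices_t t)))
     (sum_list (map (\<lambda>(H, qs). tensor (closure lam H) (eval_ps lam (bas dot) qs)) (choices_ps ps)))"
proof -
  have "coprod_a lam (Forest t ps) = sum_list (map (\<lambda>(H, q). sum_list (map (\<lambda>(H', qs).
      tensor (closure lam (H @ H')) (eval_ps lam (as_forest (eval_t lam q)) qs)) (choices_ps ps))) (choices_t t))"
    unfolding coprod_a_def choices_f.simps sum_list_map_pairs by simp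
  also have "\<dots> = sum_list (map (\<lambda>(H, q). sum_list (map (\<lambda>(H', qs).
      tensor_mul lam (tensor (closure lam H) (as_forest (eval_t lam q)))
        (tensor (closure lam H') (eval_ps lam (bas dot) qs))) (choices_ps ps))) (choices_t t))"
    by (simp add: closure_append eval_ps_eq_fmul[of lam "as_forest _"] tensor_mul_tensor)
  finally show ?thesis
    by (simp only: sum_list_bilin_right sum_list_bilin_left)
qed

lemma Forest_Leaf_Nil [simp]: "Forest Leaf [] = dot"
  by (simp add: dot_def)

lemma coprod_a_dot [simp]: "coprod_a lam dot = bas (dot, dot)"
  using coprod_a_Forest_eq_tensor_mul[of lam Leaf "[]"] by simp

lemma coprod_a_Forest:
  "coprod_a lam (Forest t ps) = tensor_mul lam (coprod_a lam (Forest t [])) (coprod_a lam (Forest Leaf ps))"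
  using coprod_a_Forest_eq_tensor_mul[of lam t ps] coprod_a_Forest_eq_tensor_mul[of lam t "[]"]
    coprod_a_Forest_eq_tensor_mul[of lam Leaf ps]
  by simp

abbreviation id_bplus :: "('x, 'k::comm_ring_1) kF2 \<Rightarrow> ('x, 'k) kF2"
  where "id_bplus \<equiv> lin (\<lambda>(a, b). bas (a, Forest (Node b) []))"

lemma tensor_as_forest_bplus: "tensor u (as_forest (bplus v)) = id_bplus (tensor u v)"
proof (induction u rule: bas_induct)
  case (single c x)
  show ?case
    by (induction v rule: bas_induct) simp_all
qed simp_all

lemma coprod_a_Node:
  "coprod_a lam (Forest (Node F) []) = bas (Forest (Node F) [], dot) + id_bplus (coprod_a lam F)"
  using coprod_a_Forest_eq_tensor_mul[of lam "Node F" "[]"]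
  by (simp add: hat_def o_def split_def tensor_as_forest_bplus coprod_a_def lin_sum_list)

abbreviation angle :: "'x \<Rightarrow> 'x forest"
  where "angle x \<equiv> Forest Leaf [(x, Leaf)]"

lemma forest_induct [case_names dot Node Cons split]:
  assumes "P dot"
    and "\<And>G. P G \<Longrightarrow> P (Forest (Node G) [])"
    and "\<And>x t ps. P (Forest t []) \<Longrightarrow> P (Forest Leaf ps) \<Longrightarrow> P (Forest Leaf ((x, t) # ps))"
    and "\<And>G ps. ps \<noteq> [] \<Longrightarrow> P (Forest (Node G) []) \<Longrightarrow> P (Forest Leaf ps) \<Longrightarrow> P (Forest (Node G) ps)"
  shows "P F"
proof (induction "size F" arbitrary: F rule: less_induct)
  case less
  obtain t ps where F: "F = Forest t ps"
    by (cases F)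
  show ?case
  proof (cases t)
    case Leaf
    show ?thesis
    proof (cases ps)
      case Nil
      then show ?thesis
        using F Leaf assms(1) by simp
    next
      case (Cons p ps')
      then show ?thesis
        using F Leaf by (cases p) (simp add: less assms(3))
    qed
  next
    case (Node G)
    show ?thesis
    proof (cases "ps = []")
      case True
      then show ?thesis
        using F Node by (simp add: less assms(2))
    next
      case False
      moreover have "P (Forest (Node G) [])" "P (Forest Leaf ps)"
        using False by (cases ps; simp add: F Node less)+
      ultimately show ?thesis
        using F Node assms(4) by simp
    qed
  qed
qed

lemma sum_list_map_triples:
  "sum_list (map f (concat (map (\<lambda>(D, s). concat (map (\<lambda>(H, q). map (\<lambda>(H', qs). k D s H q H' qs) Z) Y)) X)))
   = sum_list (map (\<lambda>(D, s). sum_list (map (\<lambda>(H, q). sum_list (map (\<lambda>(H', qs). f (k D s H q H' qs)) Z)) Y)) X)"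
  by (induction X) (auto simp: split_def o_def sum_list_map_concat_map)

lemma coprod_a_Cons:
  fixes x :: 'x
  shows "coprod_a lam (Forest Leaf ((x, t) # ps)) = tensor_mul lam
     (tensor_mul lam (bas (dot, angle x) + bas (angle x, dot)) (coprod_a lam (Forest t [])))
     (coprod_a lam (Forest Leaf ps))"
proof -
  let ?Ct = "sum_list (map (\<lambda>(H, q). tensor (closure lam H) (as_forest (eval_t lam q))) (choices_t t))"
  let ?Cps = "\<lambda>ps. sum_list (map (\<lambda>(H, qs). tensor (closure lam H) (eval_ps lam (bas dot) qs)) (choices_ps ps))"
  have Ct: "coprod_a lam (Forest t []) = ?Ct"
    using coprod_a_Forest_eq_tensor_mul[of lam t "[]"] by simp
  have Cps: "coprod_a lam (Forest Leaf qs) = ?Cps qs" for qs :: "('x \<times> 'x tree) list"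
    using coprod_a_Forest_eq_tensor_mul[of lam Leaf qs] by simp
  have inner: "sum_list (map (\<lambda>(H, q). sum_list (map (\<lambda>(H', qs).
      tensor (closure lam (D @ H @ H')) (eval_ps lam (bas dot) ((s, q) # qs))) (choices_ps ps))) (choices_t t))
    = tensor_mul lam (tensor_mul lam (tensor (closure lam D) (cdec s)) ?Ct) (?Cps ps)" for D s
  proof -
    have "sum_list (map (\<lambda>(H, q). sum_list (map (\<lambda>(H', qs).
        tensor (closure lam (D @ H @ H')) (eval_ps lam (bas dot) ((s, q) # qs))) (choices_ps ps))) (choices_t t))
      = sum_list (map (\<lambda>(H, q). sum_list (map (\<lambda>(H', qs).
        tensor_mul lam (tensor_mul lam (tensor (closure lam D) (cdec s)) (tensor (closure lam H) (as_forest (eval_t lam q))))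
          (tensor (closure lam H') (eval_ps lam (bas dot) qs))) (choices_ps ps))) (choices_t t))"
      by (simp add: closure_append eval_ps_eq_fmul[of lam "fmul lam _ _"] tensor_mul_tensor fmul_assoc)
    then show ?thesis
      by (simp only: sum_list_bilin_right sum_list_bilin_left)
  qed
  have "coprod_a lam (Forest Leaf ((x, t) # ps)) = sum_list (map (\<lambda>(D, s). sum_list (map (\<lambda>(H, q).
      sum_list (map (\<lambda>(H', qs). tensor (closure lam (D @ H @ H')) (eval_ps lam (bas dot) ((s, q) # qs)))
        (choices_ps ps))) (choices_t t))) [([], Some x), ([PDec x], None)])"
    unfolding Cps choices_ps.simps sum_list_map_triples by simp
  also have "\<dots> = tensor_mul lam (tensor_mul lam (bas (dot, angle x) + bas (angle x, dot)) ?Ct) (?Cps ps)"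
    by (simp only: list.map sum_list.Cons sum_list.Nil prod.case inner add_0_right)
       (simp add: cdec_def hat_def)
  finally show ?thesis
    by (simp only: Ct Cps)
qed

lemma coprod_a_angle: "coprod_a lam (angle x) = bas (dot, angle x) + bas (angle x, dot)"
  using coprod_a_Cons[of lam x Leaf "[]"] by simp

section \<open>The coproduct is multiplicative\<close>

abbreviation coprod :: "'k::comm_ring_1 \<Rightarrow> ('x, 'k) kF \<Rightarrow> ('x, 'k) kF2"
  where "coprod lam \<equiv> lin (coprod_a lam)"

lemma coprod_a_append:
  "coprod_a lam (Forest Leaf (ps @ qs))
    = tensor_mul lam (coprod_a lam (Forest Leaf ps)) (coprod_a lam (Forest Leaf qs))"
proof (induction ps)
  case (Cons p ps)
  then show ?case
    by (cases p) (simp add: coprod_a_Cons tensor_mul_assoc)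
qed simp

lemma coprod_a_join:
  "coprod_a lam (join F G T) = tensor_mul lam
     (tensor_mul lam (coprod_a lam (set_last F Leaf)) (coprod_a lam (Forest T []))) (coprod_a lam (set_first G Leaf))"
proof -
  obtain t ps t' qs where F: "F = Forest t ps" and G: "G = Forest t' qs"
    by (cases F; cases G)
  show ?thesis
  proof (cases "ps = []")
    case True
    then show ?thesis
      by (simp add: F G coprod_a_Forest[of lam T qs])
  next
    case False
    then obtain ps' x l where ps: "ps = ps' @ [(x, l)]"
      by (metis prod.exhaust rev_exhaust)
    have "coprod_a lam (join F G T) = coprod_a lam (Forest t (ps' @ [(x, T)] @ qs))"
      by (simp add: F G ps)
    also have "\<dots> = tensor_mul lam (coprod_a lam (Forest t [])) (tensor_mul lam (coprod_a lam (Forest Leaf ps'))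
        (tensor_mul lam (tensor_mul lam (coprod_a lam (angle x)) (coprod_a lam (Forest T [])))
          (coprod_a lam (Forest Leaf qs))))"
      by (simp add: coprod_a_Forest[of lam t "ps' @ (x, T) # qs"] coprod_a_append coprod_a_Cons coprod_a_angle)
    also have "coprod_a lam (set_last F Leaf) = tensor_mul lam (coprod_a lam (Forest t []))
        (tensor_mul lam (coprod_a lam (Forest Leaf ps')) (coprod_a lam (angle x)))"
      by (simp add: F ps coprod_a_Forest[of lam t "ps' @ [(x, Leaf)]"] coprod_a_append coprod_a_angle)
    moreover have "coprod_a lam (set_first G Leaf) = coprod_a lam (Forest Leaf qs)"
      by (simp add: G)
    ultimately show ?thesis
      by (simp add: tensor_mul_assoc)
  qed
qed

lemma coprod_a_split_last:
  "coprod_a lam F = tensor_mul lam (coprod_a lam (set_last F Leaf)) (coprod_a lam (Forest (flast F) []))"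
  using coprod_a_join[of lam F dot "flast F"] by simp

lemma coprod_a_split_first:
  "coprod_a lam G = tensor_mul lam (coprod_a lam (Forest (ffirst G) [])) (coprod_a lam (set_first G Leaf))"
  using coprod_a_join[of lam dot G "ffirst G"] by simp

lemma coprod_as_forest_bplus:
  "coprod lam (as_forest (bplus u)) = tensor (as_forest (bplus u)) (bas dot) + id_bplus (coprod lam u)"
  by (induction u rule: bas_induct) (simp_all add: coprod_a_Node)

lemma id_bplus_tensor_bas [simp]: "id_bplus (tensor u (bas b)) = tensor u (bas (Forest (Node b) []))"
  using tensor_as_forest_bplus[of u "bas b"] by simp

lemma id_bplus_tensor_mul_left:
  "id_bplus (tensor_mul lam (bas (F, dot)) V) = tensor_mul lam (bas (F, dot)) (id_bplus V)"
proof (induction V rule: bas_induct)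
  case (single c p)
  then show ?case by (cases p) simp
qed simp_all

lemma id_bplus_tensor_mul_right:
  "tensor_mul lam (id_bplus U) (bas (G, dot)) = id_bplus (tensor_mul lam U (bas (G, dot)))"
proof (induction U rule: bas_induct)
  case (single c p)
  then show ?case by (cases p) simp
qed simp_all

lemma id_bplus_rota_baxter:
  "tensor_mul lam (id_bplus U) (id_bplus V)
    = id_bplus (tensor_mul lam (id_bplus U) V) + id_bplus (tensor_mul lam U (id_bplus V))
      + smult lam (id_bplus (tensor_mul lam U V))"
proof (induction U rule: bas_induct)
  case (single c p)
  show ?case
  proof (induction V rule: bas_induct)
    case (single d p')
    obtain a b a' b' where "p = (a, b)" "p' = (a', b')"
      by (cases p; cases p')
    then show ?case
      by (simp add: fprod_Node_Node tensor_as_forest_bplus algebra_simps)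
  qed (simp_all add: algebra_simps)
qed (simp_all add: algebra_simps)

lemma coprod_tprod_Node:
  fixes a b :: "'x forest"
  assumes IH: "\<And>F G :: 'x forest. size F + size G < size a + size b + 4 \<Longrightarrow>
     coprod lam (fprod lam F G) = tensor_mul lam (coprod_a lam F) (coprod_a lam G)"
  shows "coprod lam (as_forest (tprod lam (Node a) (Node b)))
    = tensor_mul lam (coprod_a lam (Forest (Node a) [])) (coprod_a lam (Forest (Node b) []))"
proof -
  define w where "w = fprod lam (Forest (Node a) []) b + fprod lam a (Forest (Node b) []) + smult lam (fprod lam a b)"
  have "coprod lam (as_forest (tprod lam (Node a) (Node b)))
      = tensor (as_forest (bplus w)) (bas dot) + id_bplus (coprod lam w)"
    by (simp only: tprod_Node_Node w_def coprod_as_forest_bplus)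
  also have "as_forest (bplus w) = fprod lam (Forest (Node a) []) (Forest (Node b) [])"
    by (simp only: w_def fprod_Node_Node)
  also have "tensor (fprod lam (Forest (Node a) []) (Forest (Node b) [])) (bas dot) + id_bplus (coprod lam w)
      = tensor_mul lam (coprod_a lam (Forest (Node a) [])) (coprod_a lam (Forest (Node b) []))"
    unfolding w_def
    by (simp add: IH coprod_a_Node id_bplus_tensor_mul_left id_bplus_tensor_mul_right id_bplus_rota_baxter
        algebra_simps)
  finally show ?thesis .
qed

lemma lin_tensor_mul_sandwich:
  "lin (\<lambda>T. tensor_mul lam (tensor_mul lam U (h T)) W) X = tensor_mul lam (tensor_mul lam U (lin h X)) W"
  by (induction X rule: bas_induct) simp_all

lemma coprod_a_fprod: "coprod lam (fprod lam F G) = tensor_mul lam (coprod_a lam F) (coprod_a lam G)"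
proof (induction "size F + size G" arbitrary: F G rule: less_induct)
  case less
  let ?f = "flast F" and ?g = "ffirst G"
  have trees: "coprod lam (as_forest (tprod lam ?f ?g))
      = tensor_mul lam (coprod_a lam (Forest ?f [])) (coprod_a lam (Forest ?g []))"
  proof (cases "?f = Leaf \<or> ?g = Leaf")
    case True
    then show ?thesis
      by auto
  next
    case False
    then obtain a b where ab: "?f = Node a" "?g = Node b"
      by (metis tree.exhaust)
    have "size a + size b + 4 \<le> size F + size G"
      using size_flast_less[of F] size_ffirst_less[of G] ab by simp
    then show ?thesis
      unfolding ab by (intro coprod_tprod_Node less) simp
  qed
  have "coprod lam (fprod lam F G) = lin (\<lambda>T. tensor_mul lam (tensor_mul lam (coprod_a lam (set_last F Leaf))
      (coprod_a lam (Forest T []))) (coprod_a lam (set_first G Leaf))) (tprod lam ?f ?g)"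
    by (simp add: fprod_def lin_lin coprod_a_join)
  also have "\<dots> = tensor_mul lam (tensor_mul lam (coprod_a lam (set_last F Leaf))
      (coprod lam (as_forest (tprod lam ?f ?g)))) (coprod_a lam (set_first G Leaf))"
    by (simp only: lin_tensor_mul_sandwich as_forest_def lin_lin lin_bas)
  also have "\<dots> = tensor_mul lam (tensor_mul lam (coprod_a lam (set_last F Leaf)) (coprod_a lam (Forest ?f [])))
      (tensor_mul lam (coprod_a lam (Forest ?g [])) (coprod_a lam (set_first G Leaf)))"
    by (simp only: trees tensor_mul_assoc)
  also have "\<dots> = tensor_mul lam (coprod_a lam F) (coprod_a lam G)"
    by (simp only: coprod_a_split_last[symmetric] coprod_a_split_first[symmetric])
  finally show ?case .
qed

section \<open>Coassociativity\<close>

abbreviation tensor21 :: "('a \<times> 'b \<Rightarrow>\<^sub>0 'k::comm_ring_1) \<Rightarrow> ('c \<Rightarrow>\<^sub>0 'k) \<Rightarrow> ('a \<times> 'b \<times> 'c \<Rightarrow>\<^sub>0 'k)"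
  where "tensor21 W C \<equiv> lin (\<lambda>((a, b), c). bas (a, b, c)) (tensor W C)"

abbreviation tensor3_mul :: "'k::comm_ring_1 \<Rightarrow> ('x, 'k) kF3 \<Rightarrow> ('x, 'k) kF3 \<Rightarrow> ('x, 'k) kF3"
  where "tensor3_mul lam \<equiv> bilin (\<lambda>(x, y, z) (x', y', z'). tensor (fprod lam x x') (tensor (fprod lam y y') (fprod lam z z')))"

abbreviation id_id_bplus :: "('x, 'k::comm_ring_1) kF3 \<Rightarrow> ('x, 'k) kF3"
  where "id_id_bplus \<equiv> lin (\<lambda>(p, q, r). bas (p, q, Forest (Node r) []))"

definition coprod_left :: "'k::comm_ring_1 \<Rightarrow> ('x, 'k) kF2 \<Rightarrow> ('x, 'k) kF3"
  where "coprod_left lam U = lin (\<lambda>(x, y). lin (\<lambda>(p, q). bas (p, q, y)) (coprod_a lam x)) U"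

definition coprod_right :: "'k::comm_ring_1 \<Rightarrow> ('x, 'k) kF2 \<Rightarrow> ('x, 'k) kF3"
  where "coprod_right lam U = lin (\<lambda>(x, y). lin (\<lambda>(p, q). bas (x, p, q)) (coprod_a lam y)) U"

lemma tensor21_bas_right: "tensor21 W (bas c) = lin (\<lambda>(a, b). bas (a, b, c)) W"
proof (induction W rule: bas_induct)
  case (single k p)
  then show ?case by (cases p) simp
qed simp_all

lemma coprod_left_bas [simp]: "coprod_left lam (bas (x, y)) = tensor21 (coprod_a lam x) (bas y)"
  by (simp add: coprod_left_def tensor21_bas_right)

lemma coprod_left_add [simp]: "coprod_left lam (U + V) = coprod_left lam U + coprod_left lam V"
  by (simp add: coprod_left_def)

lemma coprod_left_smult [simp]: "coprod_left lam (smult c U) = smult c (coprod_left lam U)"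
  by (simp add: coprod_left_def)

lemma coprod_left_zero [simp]: "coprod_left lam 0 = 0"
  by (simp add: coprod_left_def)

lemma coprod_right_bas [simp]: "coprod_right lam (bas (x, y)) = tensor (bas x) (coprod_a lam y)"
  by (simp add: coprod_right_def tensor_bas_left split_def)

lemma coprod_right_add [simp]: "coprod_right lam (U + V) = coprod_right lam U + coprod_right lam V"
  by (simp add: coprod_right_def)

lemma coprod_right_smult [simp]: "coprod_right lam (smult c U) = smult c (coprod_right lam U)"
  by (simp add: coprod_right_def)

lemma coprod_right_zero [simp]: "coprod_right lam 0 = 0"
  by (simp add: coprod_right_def)

lemma tensor_tensor_eq_tensor21: "tensor A (tensor B C) = tensor21 (tensor A B) C"
proof (induction A rule: bas_induct)
  case (single c a)
  show ?case
  proof (induction B rule: bas_induct)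
    case (single d b)
    show ?case
      by (induction C rule: bas_induct) (simp_all add: mult_ac)
  qed simp_all
qed simp_all

lemma coprod_left_tensor: "coprod_left lam (tensor A B) = tensor21 (coprod lam A) B"
proof (induction A rule: bas_induct)
  case (single c a)
  show ?case
    by (induction B rule: bas_induct) simp_all
qed simp_all

lemma coprod_right_tensor: "coprod_right lam (tensor A B) = tensor A (coprod lam B)"
proof (induction A rule: bas_induct)
  case (single c a)
  show ?case
    by (induction B rule: bas_induct) simp_all
qed simp_all

lemma tensor3_mul_tensor21:
  "tensor3_mul lam (tensor21 W C) (tensor21 W' C') = tensor21 (tensor_mul lam W W') (fmul lam C C')"
proof (induction W rule: bas_induct)
  case (single c1 p)
  show ?case
  proof (induction C rule: bas_induct)
    case (single c2 y)
    show ?case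
    proof (induction W' rule: bas_induct)
      case (single c3 p')
      show ?case
      proof (induction C' rule: bas_induct)
        case (single c4 y')
        obtain a b a' b' where "p = (a, b)" "p' = (a', b')"
          by (cases p; cases p')
        then show ?case
          by (simp add: tensor_tensor_eq_tensor21 mult_ac)
      qed simp_all
    qed simp_all
  qed simp_all
qed simp_all

lemma tensor3_mul_tensor:
  "tensor3_mul lam (tensor A W) (tensor A' W') = tensor (fmul lam A A') (tensor_mul lam W W')"
proof (induction W rule: bas_induct)
  case (single c1 p)
  show ?case
  proof (induction A rule: bas_induct)
    case (single c2 y)
    show ?case
    proof (induction W' rule: bas_induct)
      case (single c3 p')
      show ?case
      proof (induction A' rule: bas_induct)
        case (single c4 y')
        obtain a b a' b' where "p = (a, b)" "p' = (a', b')"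
          by (cases p; cases p')
        then show ?case
          by (simp add: mult_ac)
      qed simp_all
    qed simp_all
  qed simp_all
qed simp_all

lemma coprod_left_tensor_mul:
  "coprod_left lam (tensor_mul lam U V) = tensor3_mul lam (coprod_left lam U) (coprod_left lam V)"
proof (induction U rule: bas_induct)
  case (single c p)
  show ?case
  proof (induction V rule: bas_induct)
    case (single d p')
    obtain a b a' b' where "p = (a, b)" "p' = (a', b')"
      by (cases p; cases p')
    then show ?case
      using tensor3_mul_tensor21[of lam "coprod_a lam a" "bas b" "coprod_a lam a'" "bas b'"]
      by (simp add: coprod_left_tensor coprod_a_fprod mult_ac)
  qed simp_all
qed simp_all

lemma coprod_right_tensor_mul:
  "coprod_right lam (tensor_mul lam U V) = tensor3_mul lam (coprod_right lam U) (coprod_right lam V)"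
proof (induction U rule: bas_induct)
  case (single c p)
  show ?case
  proof (induction V rule: bas_induct)
    case (single d p')
    obtain a b a' b' where "p = (a, b)" "p' = (a', b')"
      by (cases p; cases p')
    then show ?case
      using tensor3_mul_tensor[of lam "bas a" "coprod_a lam b" "bas a'" "coprod_a lam b'"]
      by (simp add: coprod_right_tensor coprod_a_fprod mult_ac)
  qed simp_all
qed simp_all

lemma id_id_bplus_tensor21: "id_id_bplus (tensor21 W (bas c)) = tensor21 W (bas (Forest (Node c) []))"
proof (induction W rule: bas_induct)
  case (single k p)
  then show ?case by (cases p) simp
qed simp_all

lemma id_id_bplus_tensor: "id_id_bplus (tensor (bas a) W) = tensor (bas a) (id_bplus W)"
proof (induction W rule: bas_induct)
  case (single k p)
  then show ?case by (cases p) simp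
qed simp_all

lemma coprod_left_id_bplus: "coprod_left lam (id_bplus U) = id_id_bplus (coprod_left lam U)"
proof (induction U rule: bas_induct)
  case (single c p)
  then show ?case by (cases p) (simp add: id_id_bplus_tensor21)
qed simp_all

lemma coprod_right_id_bplus:
  "coprod_right lam (id_bplus U) = tensor21 (id_bplus U) (bas dot) + id_id_bplus (coprod_right lam U)"
proof (induction U rule: bas_induct)
  case (single c p)
  then show ?case by (cases p) (simp add: id_id_bplus_tensor coprod_a_Node)
qed (simp_all add: algebra_simps)

lemma coprod_a_coassoc: "coprod_left lam (coprod_a lam F) = coprod_right lam (coprod_a lam F)"
proof (induction F rule: forest_induct)
  case (Node G)
  then show ?case
    by (simp add: coprod_a_Node coprod_left_id_bplus coprod_right_id_bplus)
next
  case (Cons x t ps)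
  moreover have "coprod_left lam (bas (dot, angle x) + bas (angle x, dot))
      = coprod_right lam (bas (dot, angle x) + bas (angle x, dot))"
    by (simp add: coprod_a_angle)
  ultimately show ?case
    by (simp only: coprod_a_Cons coprod_left_tensor_mul coprod_right_tensor_mul)
next
  case (split G ps)
  then show ?case
    by (simp only: coprod_a_Forest[of lam "Node G" ps] coprod_left_tensor_mul coprod_right_tensor_mul)
qed simp

section \<open>The counit\<close>

abbreviation counit_left :: "('x, 'k::comm_ring_1) kF2 \<Rightarrow> ('x, 'k) kF"
  where "counit_left \<equiv> lin (\<lambda>(x, y). smult (counit_a x) (bas y))"

abbreviation counit_right :: "('x, 'k::comm_ring_1) kF2 \<Rightarrow> ('x, 'k) kF"
  where "counit_right \<equiv> lin (\<lambda>(x, y). smult (counit_a y) (bas x))"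

lemma counit_a_dot [simp]: "counit_a dot = 1"
  by (simp add: counit_a_def)

lemma counit_a_Node [simp]: "counit_a (Forest (Node F) []) = 0"
  by (simp add: counit_a_def dot_def del: Forest_Leaf_Nil)

lemma counit_a_Leaf_Cons [simp]: "counit_a (Forest Leaf (p # ps)) = 0"
  by (simp add: counit_a_def dot_def del: Forest_Leaf_Nil)

lemma counit_a_eq_lookup: "counit_a F = Poly_Mapping.lookup (bas F) dot"
  by (simp add: counit_a_def lookup_bas)

lemma counit_left_tensor: "counit_left (tensor A B) = smult (Poly_Mapping.lookup A dot) B"
proof (induction A rule: bas_induct)
  case (single c a)
  show ?case
    by (induction B rule: bas_induct) (simp_all add: counit_a_eq_lookup mult_ac)
next
  case (add u v)
  then show ?case
    by (simp add: lookup_add smult_add_left)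
qed simp

lemma counit_right_tensor: "counit_right (tensor A B) = smult (Poly_Mapping.lookup B dot) A"
proof (induction A rule: bas_induct)
  case (single c a)
  show ?case
  proof (induction B rule: bas_induct)
    case (add u v)
    then show ?case
      by (simp add: lookup_add smult_add_left distrib_right)
  qed (simp_all add: counit_a_eq_lookup mult_ac)
qed simp_all

lemma lin_scalar_counit_a: "lin_scalar counit_a v = Poly_Mapping.lookup v dot"
proof -
  have "lin_scalar counit_a v = (\<Sum>a\<in>Poly_Mapping.keys v. if a = dot then Poly_Mapping.lookup v a else 0)"
    unfolding lin_scalar_def counit_a_def by (rule sum.cong) auto
  then show ?thesis
    by (simp add: in_keys_iff)
qed

lemma keys_tprod_Node_Node: "Poly_Mapping.keys (tprod lam (Node F) (Node G)) \<subseteq> range Node"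
  unfolding tprod_Node_Node using keys_lin by fastforce

lemma lookup_fprod_dot: "Poly_Mapping.lookup (fprod lam F G) dot = counit_a F * counit_a G"
proof (cases "F = dot \<or> G = dot")
  case True
  then show ?thesis
    by (auto simp: lookup_bas counit_a_def)
next
  case False
  have "dot \<notin> Poly_Mapping.keys (fprod lam F G)"
  proof
    assume "dot \<in> Poly_Mapping.keys (fprod lam F G)"
    then obtain T where T: "T \<in> Poly_Mapping.keys (tprod lam (flast F) (ffirst G))" "join F G T = dot"
      unfolding fprod_def using keys_lin[of "\<lambda>T. bas (join F G T)"] by fastforce
    obtain t ps t' qs where FG: "F = Forest t ps" "G = Forest t' qs"
      by (cases F; cases G)
    with T(2) have "ps = []" "qs = []" "T = Leaf"
      by (auto simp: dot_def split: if_splits simp del: Forest_Leaf_Nil)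
    with False FG obtain F' G' where "t = Node F'" "t' = Node G'"
      by (metis dot_def tree.exhaust)
    with T(1) keys_tprod_Node_Node[of lam F' G'] FG \<open>ps = []\<close> \<open>qs = []\<close> \<open>T = Leaf\<close> show False
      by auto
  qed
  then show ?thesis
    using False by (simp add: counit_a_def in_keys_iff)
qed

lemma counit_left_tensor_mul: "counit_left (tensor_mul lam U V) = fmul lam (counit_left U) (counit_left V)"
proof (induction U rule: bas_induct)
  case (single c p)
  show ?case
  proof (induction V rule: bas_induct)
    case (single d p')
    then show ?case
      by (cases p; cases p') (simp add: counit_left_tensor lookup_fprod_dot mult_ac)
  qed simp_all
qed simp_all

lemma counit_right_tensor_mul: "counit_right (tensor_mul lam U V) = fmul lam (counit_right U) (counit_right V)"
proof (induction U rule: bas_induct)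
  case (single c p)
  show ?case
  proof (induction V rule: bas_induct)
    case (single d p')
    then show ?case
      by (cases p; cases p') (simp add: counit_right_tensor lookup_fprod_dot mult_ac)
  qed simp_all
qed simp_all

lemma counit_left_id_bplus: "counit_left (id_bplus U) = as_forest (bplus (counit_left U))"
proof (induction U rule: bas_induct)
  case (single c p)
  then show ?case by (cases p) simp
qed simp_all

lemma counit_right_id_bplus: "counit_right (id_bplus U) = 0"
proof (induction U rule: bas_induct)
  case (single c p)
  then show ?case by (cases p) simp
qed simp_all

lemma fprod_Nil_Leaf: "fprod lam (Forest t []) (Forest Leaf ps) = bas (Forest t ps)"
  by (simp add: fprod_def del: Forest_Leaf_Nil)

lemma fprod_angle: "fprod lam (angle x) (Forest t []) = bas (Forest Leaf [(x, t)])"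
  by (simp add: fprod_def del: Forest_Leaf_Nil)

lemma fprod_Leaf_single_Leaf:
  "fprod lam (Forest Leaf [(x, t)]) (Forest Leaf ps) = bas (Forest Leaf ((x, t) # ps))"
  by (simp add: fprod_def del: Forest_Leaf_Nil)

lemma coprod_a_counit: "counit_left (coprod_a lam F) = bas F \<and> counit_right (coprod_a lam F) = bas F"
proof (induction F rule: forest_induct)
  case (Node G)
  then show ?case
    by (simp add: coprod_a_Node counit_left_id_bplus counit_right_id_bplus)
next
  case (Cons x t ps)
  then show ?case
    by (simp add: coprod_a_Cons counit_left_tensor_mul counit_right_tensor_mul
        fprod_angle fprod_Leaf_single_Leaf del: Forest_Leaf_Nil)
next
  case (split G ps)
  then show ?case
    by (simp only: coprod_a_Forest[of lam "Node G" ps] counit_left_tensor_mul counit_right_tensor_mul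
        bilin_bas fprod_Nil_Leaf)
qed simp

section \<open>Grading and the antipode\<close>

lemma size_set_first: "size (set_first G T) + size (ffirst G) = size G + size T"
  by (cases G) auto

lemma size_join: "size (join F G T) + size (flast F) + size (ffirst G) + 1 = size F + size G + size T"
proof -
  obtain t ps t' qs where F: "F = Forest t ps" and G: "G = Forest t' qs"
    by (cases F; cases G)
  show ?thesis
  proof (cases ps rule: rev_cases)
    case (snoc ps' p)
    then show ?thesis
      by (cases p) (simp add: F G)
  qed (simp add: F G)
qed

lemma size_set_last: "size (set_last F T) + size (flast F) = size F + size T"
  using size_join[of F "Forest Leaf []" T] by (simp add: join_Nil_right del: Forest_Leaf_Nil)

lemma in_keys_lin_bas: "y \<in> Poly_Mapping.keys (lin (\<lambda>a. bas (h a)) v) \<Longrightarrow> \<exists>a\<in>Poly_Mapping.keys v. y = h a"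
  using keys_lin[of "\<lambda>a. bas (h a)" v] by auto

lemma size_le_of_in_keys_tprod: "T \<in> Poly_Mapping.keys (tprod lam f g) \<Longrightarrow> size T \<le> size f + size g"
proof (induction lam f g arbitrary: T rule: tprod.induct)
  case (3 lam F G)
  let ?A = "lin (\<lambda>T. bas (Node (set_first G T))) (tprod lam (Node F) (ffirst G))"
  let ?B = "lin (\<lambda>T. bas (Node (set_last F T))) (tprod lam (flast F) (Node G))"
  let ?C = "lin (\<lambda>T. bas (Node (join F G T))) (tprod lam (flast F) (ffirst G))"
  have "T \<in> Poly_Mapping.keys ?A \<union> Poly_Mapping.keys ?B \<union> Poly_Mapping.keys ?C"
    using "3.prems"[unfolded tprod.simps(3)] Poly_Mapping.keys_add[of "?A + ?B" "smult lam ?C"]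
      Poly_Mapping.keys_add[of ?A ?B] keys_smult[of lam ?C] by blast
  then consider
      T' where "T' \<in> Poly_Mapping.keys (tprod lam (Node F) (ffirst G))" "T = Node (set_first G T')"
    | T' where "T' \<in> Poly_Mapping.keys (tprod lam (flast F) (Node G))" "T = Node (set_last F T')"
    | T' where "T' \<in> Poly_Mapping.keys (tprod lam (flast F) (ffirst G))" "T = Node (join F G T')"
    using in_keys_lin_bas[of T "\<lambda>T. Node (set_first G T)"] in_keys_lin_bas[of T "\<lambda>T. Node (set_last F T)"]
      in_keys_lin_bas[of T "\<lambda>T. Node (join F G T)"] by blast
  then show ?case
  proof cases
    case (1 T')
    then show ?thesis using "3.IH"(1)[of T'] size_set_first[of G T'] by simp
  next
    case (2 T')
    then show ?thesis using "3.IH"(2)[of T'] size_set_last[of F T'] by simp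
  next
    case (3 T')
    then show ?thesis using "3.IH"(3)[of T'] size_join[of F G T'] by simp
  qed
qed simp_all

definition grade :: "'x forest \<Rightarrow> nat"
  where "grade F = size F - 1"

lemma grade_dot [simp]: "grade dot = 0"
  by (simp add: grade_def dot_def del: Forest_Leaf_Nil)

lemma grade_eq_0_iff: "grade F = 0 \<longleftrightarrow> F = dot"
proof
  assume "grade F = 0"
  then have size: "size F = 1"
    by (cases F) (simp add: grade_def)
  obtain t ps where F: "F = Forest t ps"
    by (cases F)
  have "t = Leaf" "ps = []"
    using size F by (cases t; cases ps; simp)+
  then show "F = dot"
    by (simp add: F)
qed simp

lemma grade_Forest: "grade (Forest t ps) = size t + size_list (size_prod (\<lambda>_. 0) size) ps"
  by (simp add: grade_def)

lemma grade_Node [simp]: "grade (Forest (Node F) []) = grade F + 2"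
  by (cases F) (simp add: grade_def)

lemma grade_le_of_in_keys_fprod: "K \<in> Poly_Mapping.keys (fprod lam F G) \<Longrightarrow> grade K \<le> grade F + grade G"
proof -
  assume "K \<in> Poly_Mapping.keys (fprod lam F G)"
  then obtain T where T: "T \<in> Poly_Mapping.keys (tprod lam (flast F) (ffirst G))" "K = join F G T"
    unfolding fprod_def using in_keys_lin_bas[of K "join F G"] by blast
  moreover have "size F \<ge> 1" "size G \<ge> 1"
    by (cases F; simp) (cases G; simp)
  ultimately show ?thesis
    using size_le_of_in_keys_tprod[OF T(1)] size_join[of F G T] by (simp add: grade_def)
qed

definition grade_bounded :: "nat \<Rightarrow> ('x, 'k::comm_ring_1) kF2 \<Rightarrow> bool"
  where "grade_bounded n U \<longleftrightarrow> (\<forall>(x, y) \<in> Poly_Mapping.keys U. grade x + grade y \<le> n)"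

lemma grade_bounded_bas: "grade a + grade b \<le> n \<Longrightarrow> grade_bounded n (bas (a, b))"
  by (simp add: grade_bounded_def)

lemma grade_bounded_add: "grade_bounded n U \<Longrightarrow> grade_bounded n V \<Longrightarrow> grade_bounded n (U + V)"
  unfolding grade_bounded_def using Poly_Mapping.keys_add[of U V] by blast

lemma grade_bounded_tensor_mul:
  assumes U: "grade_bounded n U" and V: "grade_bounded m V"
  shows "grade_bounded (n + m) (tensor_mul lam U V)"
  unfolding grade_bounded_def
proof (clarify)
  fix K L
  assume "(K, L) \<in> Poly_Mapping.keys (tensor_mul lam U V)"
  then obtain x y x' y' where xy: "(x, y) \<in> Poly_Mapping.keys U" "(x', y') \<in> Poly_Mapping.keys V"
    and "(K, L) \<in> Poly_Mapping.keys (tensor (fprod lam x x') (fprod lam y y'))"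
    using keys_bilin[of "\<lambda>(x, y) (x', y'). tensor (fprod lam x x') (fprod lam y y')" U V] by fastforce
  then have "K \<in> Poly_Mapping.keys (fprod lam x x')" "L \<in> Poly_Mapping.keys (fprod lam y y')"
    using keys_tensor by blast+
  then have "grade K \<le> grade x + grade x'" "grade L \<le> grade y + grade y'"
    by (simp_all add: grade_le_of_in_keys_fprod)
  moreover have "grade x + grade y \<le> n" "grade x' + grade y' \<le> m"
    using U V xy unfolding grade_bounded_def by fastforce+
  ultimately show "grade K + grade L \<le> n + m"
    by simp
qed

lemma grade_bounded_id_bplus:
  assumes U: "grade_bounded n U"
  shows "grade_bounded (n + 2) (id_bplus U)"
  unfolding grade_bounded_def
proof (clarify)
  fix K L
  assume "(K, L) \<in> Poly_Mapping.keys (id_bplus U)"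
  then obtain x y where "(x, y) \<in> Poly_Mapping.keys U" "K = x" "L = Forest (Node y) []"
    using keys_lin[of "\<lambda>(a, b). bas (a, Forest (Node b) [])" U] by fastforce
  with U show "grade K + grade L \<le> n + 2"
    unfolding grade_bounded_def by fastforce
qed

lemma grade_bounded_coprod_a:
  fixes lam :: "'k::comm_ring_1" and F :: "'x forest"
  shows "grade_bounded (grade F) (coprod_a lam F)"
proof (induction F rule: forest_induct)
  case dot
  then show ?case
    by (simp add: grade_bounded_bas)
next
  case (Node G)
  then have "grade_bounded (grade G + 2) (id_bplus (coprod_a lam G))"
    by (rule grade_bounded_id_bplus)
  then show ?case
    by (simp add: coprod_a_Node grade_bounded_add grade_bounded_bas)
next
  case (Cons x t ps)
  have "grade_bounded 2 (bas (dot, angle x) + bas (angle x, dot) :: ('x, 'k) kF2)"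
    by (simp add: grade_bounded_add grade_bounded_bas grade_Forest del: Forest_Leaf_Nil)
  then have "grade_bounded (2 + grade (Forest t []) + grade (Forest Leaf ps))
      (coprod_a lam (Forest Leaf ((x, t) # ps)))"
    unfolding coprod_a_Cons using Cons by (intro grade_bounded_tensor_mul)
  moreover have "2 + grade (Forest t []) + grade (Forest Leaf ps) = grade (Forest Leaf ((x, t) # ps))"
    by (simp add: grade_Forest del: Forest_Leaf_Nil)
  ultimately show ?case
    by simp
next
  case (split G ps)
  then have "grade_bounded (grade (Forest (Node G) []) + grade (Forest Leaf ps))
      (coprod_a lam (Forest (Node G) ps))"
    unfolding coprod_a_Forest[of lam "Node G" ps] by (intro grade_bounded_tensor_mul)
  moreover have "grade (Forest (Node G) []) + grade (Forest Leaf ps) = grade (Forest (Node G) ps)"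
    by (simp add: grade_Forest del: Forest_Leaf_Nil)
  ultimately show ?case
    by simp
qed

lemma lookup_counit_right: "Poly_Mapping.lookup (counit_right U) a = Poly_Mapping.lookup U (a, dot)"
proof (induction U rule: bas_induct)
  case (single c p)
  then show ?case by (cases p) (auto simp: lookup_bas counit_a_def)
qed (simp_all add: lookup_add)

lemma lookup_counit_left: "Poly_Mapping.lookup (counit_left U) b = Poly_Mapping.lookup U (dot, b)"
proof (induction U rule: bas_induct)
  case (single c p)
  then show ?case by (cases p) (auto simp: lookup_bas counit_a_def)
qed (simp_all add: lookup_add)

lemma grade_fst_less_of_in_keys_coprod_a:
  fixes lam :: "'k::comm_ring_1" and F :: "'x forest"
  assumes "(x, y) \<in> Poly_Mapping.keys (coprod_a lam F - bas (F, dot))"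
  shows "grade x < grade F"
proof (rule ccontr)
  assume not_less: "\<not> grade x < grade F"
  have "y = dot"
  proof (cases "(x, y) = (F, dot)")
    case False
    then have "(x, y) \<in> Poly_Mapping.keys (coprod_a lam F)"
      using assms Poly_Mapping.keys_diff[of "coprod_a lam F" "bas (F, dot)"] by auto
    then have "grade x + grade y \<le> grade F"
      using grade_bounded_coprod_a[of F lam] unfolding grade_bounded_def by fastforce
    with not_less have "grade y = 0"
      by simp
    then show ?thesis
      by (simp add: grade_eq_0_iff)
  qed simp
  moreover have "Poly_Mapping.lookup (coprod_a lam F) (x, dot) = Poly_Mapping.lookup (bas (F, dot)) (x, dot)"
    using lookup_counit_right[of "coprod_a lam F" x] coprod_a_counit[of lam F] by (simp add: lookup_bas)
  ultimately show False
    using assms by (auto simp: in_keys_iff lookup_minus)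
qed

lemma grade_snd_less_of_in_keys_coprod_a:
  fixes lam :: "'k::comm_ring_1" and F :: "'x forest"
  assumes "(x, y) \<in> Poly_Mapping.keys (coprod_a lam F - bas (dot, F))"
  shows "grade y < grade F"
proof (rule ccontr)
  assume not_less: "\<not> grade y < grade F"
  have "x = dot"
  proof (cases "(x, y) = (dot, F)")
    case False
    then have "(x, y) \<in> Poly_Mapping.keys (coprod_a lam F)"
      using assms Poly_Mapping.keys_diff[of "coprod_a lam F" "bas (dot, F)"] by auto
    then have "grade x + grade y \<le> grade F"
      using grade_bounded_coprod_a[of F lam] unfolding grade_bounded_def by fastforce
    with not_less have "grade x = 0"
      by simp
    then show ?thesis
      by (simp add: grade_eq_0_iff)
  qed simp
  moreover have "Poly_Mapping.lookup (coprod_a lam F) (dot, y) = Poly_Mapping.lookup (bas (dot, F)) (dot, y)"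
    using lookup_counit_left[of "coprod_a lam F" y] coprod_a_counit[of lam F] by (simp add: lookup_bas)
  ultimately show False
    using assms by (auto simp: in_keys_iff lookup_minus)
qed

function antipode_left :: "'k::comm_ring_1 \<Rightarrow> 'x forest \<Rightarrow> ('x, 'k) kF"
  where "antipode_left lam F = smult (counit_a F) (bas dot)
    - lin (\<lambda>(x, y). fmul lam (antipode_left lam x) (bas y)) (coprod_a lam F - bas (F, dot))"
  by auto
termination
  by (relation "measure (\<lambda>(lam, F). grade F)") (auto dest: grade_fst_less_of_in_keys_coprod_a)

function antipode_right :: "'k::comm_ring_1 \<Rightarrow> 'x forest \<Rightarrow> ('x, 'k) kF"
  where "antipode_right lam F = smult (counit_a F) (bas dot)
    - lin (\<lambda>(x, y). fmul lam (bas x) (antipode_right lam y)) (coprod_a lam F - bas (dot, F))"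
  by auto
termination
  by (relation "measure (\<lambda>(lam, F). grade F)") (auto dest: grade_snd_less_of_in_keys_coprod_a)

declare antipode_left.simps [simp del] antipode_right.simps [simp del]

lemma antipode_left_convolution:
  "lin (\<lambda>(x, y). fmul lam (antipode_left lam x) (bas y)) (coprod_a lam F) = smult (counit_a F) (bas dot)"
proof -
  let ?S = "\<lambda>U. lin (\<lambda>(x, y). fmul lam (antipode_left lam x) (bas y)) U"
  have "?S (coprod_a lam F) = ?S (bas (F, dot)) + ?S (coprod_a lam F - bas (F, dot))"
    by (subst lin_add[symmetric]) simp
  also have "\<dots> = smult (counit_a F) (bas dot)"
    by (simp add: antipode_left.simps[of lam F])
  finally show ?thesis .
qed

lemma antipode_right_convolution:
  "lin (\<lambda>(x, y). fmul lam (bas x) (antipode_right lam y)) (coprod_a lam F) = smult (counit_a F) (bas dot)"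
proof -
  let ?S = "\<lambda>U. lin (\<lambda>(x, y). fmul lam (bas x) (antipode_right lam y)) U"
  have "?S (coprod_a lam F) = ?S (bas (dot, F)) + ?S (coprod_a lam F - bas (dot, F))"
    by (subst lin_add[symmetric]) simp
  also have "\<dots> = smult (counit_a F) (bas dot)"
    by (simp add: antipode_right.simps[of lam F])
  finally show ?thesis .
qed

section \<open>Convolution\<close>

definition convolution ::
  "'k::comm_ring_1 \<Rightarrow> ('x forest \<Rightarrow> ('x, 'k) kF) \<Rightarrow> ('x forest \<Rightarrow> ('x, 'k) kF)
    \<Rightarrow> 'x forest \<Rightarrow> ('x, 'k) kF"
  where "convolution lam f g F = lin (\<lambda>(x, y). fmul lam (f x) (g y)) (coprod_a lam F)"

definition unit_counit :: "'x forest \<Rightarrow> ('x, 'k::comm_ring_1) kF"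
  where "unit_counit F = smult (counit_a F) (bas dot)"

lemma convolution_assoc: "convolution lam (convolution lam f g) h = convolution lam f (convolution lam g h)"
proof
  fix F
  have "convolution lam (convolution lam f g) h F
      = lin (\<lambda>(x, y). lin (\<lambda>(p, q). fmul lam (fmul lam (f p) (g q)) (h y)) (coprod_a lam x)) (coprod_a lam F)"
    unfolding convolution_def by (intro lin_cong) (auto simp: bilin_lin_left split_def)
  also have "\<dots> = lin (\<lambda>(p, q, r). fmul lam (fmul lam (f p) (g q)) (h r)) (coprod_left lam (coprod_a lam F))"
    by (simp add: coprod_left_def lin_lin split_def)
  also have "\<dots> = lin (\<lambda>(p, q, r). fmul lam (f p) (fmul lam (g q) (h r))) (coprod_right lam (coprod_a lam F))"
    by (simp add: coprod_a_coassoc fmul_assoc)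
  also have "\<dots> = lin (\<lambda>(x, y). lin (\<lambda>(p, q). fmul lam (f x) (fmul lam (g p) (h q))) (coprod_a lam y)) (coprod_a lam F)"
    by (simp add: coprod_right_def lin_lin split_def)
  also have "\<dots> = convolution lam f (convolution lam g h) F"
    unfolding convolution_def by (intro lin_cong) (auto simp: bilin_lin_right split_def)
  finally show "convolution lam (convolution lam f g) h F = convolution lam f (convolution lam g h) F" .
qed

lemma convolution_unit_counit_right: "convolution lam f unit_counit = f"
proof
  fix F
  have "convolution lam f unit_counit F = lin f (counit_right (coprod_a lam F))"
    unfolding convolution_def unit_counit_def by (simp add: lin_lin split_def)
  then show "convolution lam f unit_counit F = f F"
    using coprod_a_counit[of lam F] by simp
qed

lemma convolution_unit_counit_left: "convolution lam unit_counit g = g"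
proof
  fix F
  have "convolution lam unit_counit g F = lin g (counit_left (coprod_a lam F))"
    unfolding convolution_def unit_counit_def by (simp add: lin_lin split_def)
  then show "convolution lam unit_counit g F = g F"
    using coprod_a_counit[of lam F] by simp
qed

lemma antipode_left_eq_antipode_right: "antipode_left lam = antipode_right lam"
proof -
  have left: "convolution lam (antipode_left lam) bas = unit_counit"
    by (rule ext) (simp add: convolution_def unit_counit_def antipode_left_convolution)
  have right: "convolution lam bas (antipode_right lam) = unit_counit"
    by (rule ext) (simp add: convolution_def unit_counit_def antipode_right_convolution)
  have "antipode_left lam = convolution lam (antipode_left lam) (convolution lam bas (antipode_right lam))"
    by (simp add: right convolution_unit_counit_right)
  also have "\<dots> = antipode_right lam"
    by (simp flip: convolution_assoc add: left convolution_unit_counit_left)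
  finally show ?thesis .
qed

theorem mainTheorem3:
  fixes lam :: "'k::comm_ring_1"
  shows "is_hopf_algebra (fprod lam :: 'x forest \<Rightarrow> 'x forest \<Rightarrow> ('x forest \<Rightarrow>\<^sub>0 'k))
           (bas dot) (coprod_a lam) counit_a"
proof -
  have "is_bialgebra (fprod lam :: 'x forest \<Rightarrow> 'x forest \<Rightarrow> ('x, 'k) kF) (bas dot) (coprod_a lam) counit_a"
    unfolding is_bialgebra_def
    by (intro conjI allI fprod_assoc coprod_a_coassoc[unfolded coprod_left_def coprod_right_def]
        coprod_a_fprod coprod_a_counit[THEN conjunct1] coprod_a_counit[THEN conjunct2])
      (simp_all add: lin_scalar_counit_a lookup_fprod_dot lookup_bas)
  moreover have "is_antipode (fprod lam :: 'x forest \<Rightarrow> 'x forest \<Rightarrow> ('x, 'k) kF) (bas dot)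
      (coprod_a lam) counit_a (antipode_left lam)"
    unfolding is_antipode_def
    using antipode_left_convolution antipode_right_convolution[folded antipode_left_eq_antipode_right]
    by blast
  ultimately show ?thesis
    unfolding is_hopf_algebra_def by blast
qed

end
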